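(* Let $k$ be a commutative ring over which every finitely generated projective module is free, and let $A$ be a $k$-linear semi-Hopf category (i.e. a semi-Hopf $\mathcal V$-category for $\mathcal V=\mathsf{Mod}_k$) with object set $X$ such that each $A_{x,y}$ is finitely generated projective (hence free of finite rank), and such that for all $x,y\in X$ with $A_{x,y}\neq0$ the ranks of $A_{x,y}$ and $A_{y,y}$ coincide. If $s=\{s_{xy}\}$ is a right antipode of $A$, then $s$ is also a left antipode, hence an antipode, and $A$ is a Hopf category.
   Context: $\mathsf{Mod}_k$ has the usual tensor product and symmetry. A $k$-linear category $A$ with object set $X$: $k$-modules $A_{x,y}$, $k$-bilinear compositions $m_{xyz}\colon A_{x,y}\otimes A_{y,z}\to A_{x,z}$ and units $j_x\colon k\to A_{x,x}$, associative and unital. Semi-Hopf: each $A_{x,y}$ is a $k$-coalgebra $(\delta_{xy},\epsilon_{xy})$ and all $m_{xyz},j_x$ are coalgebra morphisms. Right antipode: $k$-linear maps $s_{xy}\colon A_{x,y}\to A_{y,x}$ with $m_{xyx}\circ(1\otimes s_{xy})\circ\delta_{xy}=j_x\circ\epsilon_{xy}$ (in Sweedler notation $a_{(1)}s_{xy}(a_{(2)})=\epsilon_{xy}(a)1_x$); left antipode: $m_{yxy}\circ(s_{xy}\otimes1)\circ\delta_{xy}=j_y\circ\epsilon_{xy}$; antipode: both. *)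

theory Defs
  imports Main
begin

record ('k, 'a) kmod =
  mcarrier :: "'a set"
  madd :: "'a \<Rightarrow> 'a \<Rightarrow> 'a"
  mzero :: 'a
  msmult :: "'k \<Rightarrow> 'a \<Rightarrow> 'a"

definition is_kmodule :: "('k::comm_ring_1, 'a) kmod \<Rightarrow> bool" where
  "is_kmodule M \<longleftrightarrow>
     mzero M \<in> mcarrier M
   \<and> (\<forall>u\<in>mcarrier M. \<forall>v\<in>mcarrier M. madd M u v \<in> mcarrier M)
   \<and> (\<forall>c. \<forall>v\<in>mcarrier M. msmult M c v \<in> mcarrier M)
   \<and> (\<forall>u\<in>mcarrier M. \<forall>v\<in>mcarrier M. \<forall>w\<in>mcarrier M.
        madd M (madd M u v) w = madd M u (madd M v w))
   \<and> (\<forall>u\<in>mcarrier M. \<forall>v\<in>mcarrier M. madd M u v = madd M v u)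
   \<and> (\<forall>v\<in>mcarrier M. madd M (mzero M) v = v)
   \<and> (\<forall>v\<in>mcarrier M. \<exists>w\<in>mcarrier M. madd M v w = mzero M)
   \<and> (\<forall>a. \<forall>u\<in>mcarrier M. \<forall>v\<in>mcarrier M.
        msmult M a (madd M u v) = madd M (msmult M a u) (msmult M a v))
   \<and> (\<forall>a b. \<forall>v\<in>mcarrier M. msmult M (a + b) v = madd M (msmult M a v) (msmult M b v))
   \<and> (\<forall>a b. \<forall>v\<in>mcarrier M. msmult M (a * b) v = msmult M a (msmult M b v))
   \<and> (\<forall>v\<in>mcarrier M. msmult M 1 v = v)"

definition msum :: "('k, 'a) kmod \<Rightarrow> 'a list \<Rightarrow> 'a" where
  "msum M vs = foldr (madd M) vs (mzero M)"

definition klinear :: "('k, 'a) kmod \<Rightarrow> ('k, 'b) kmod \<Rightarrow> ('a \<Rightarrow> 'b) \<Rightarrow> bool" where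
  "klinear M N f \<longleftrightarrow>
     (\<forall>v\<in>mcarrier M. f v \<in> mcarrier N)
   \<and> (\<forall>u\<in>mcarrier M. \<forall>v\<in>mcarrier M. f (madd M u v) = madd N (f u) (f v))
   \<and> (\<forall>c. \<forall>v\<in>mcarrier M. f (msmult M c v) = msmult N c (f v))"

definition kpow :: "nat \<Rightarrow> ('k::comm_ring_1, nat \<Rightarrow> 'k) kmod" where
  "kpow n = \<lparr> mcarrier = {f. \<forall>j\<ge>n. f j = 0},
              madd = (\<lambda>f g j. f j + g j),
              mzero = (\<lambda>j. 0),
              msmult = (\<lambda>c f j. c * f j) \<rparr>"

text \<open>Finitely generated projective = direct summand (retract) of some k^n.\<close>
definition fg_projective :: "('k::comm_ring_1, 'a) kmod \<Rightarrow> bool" where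
  "fg_projective M \<longleftrightarrow>
     (\<exists>n i p. klinear M (kpow n) i \<and> klinear (kpow n) M p \<and> (\<forall>v\<in>mcarrier M. p (i v) = v))"

definition is_basis :: "('k::comm_ring_1, 'a) kmod \<Rightarrow> (nat \<Rightarrow> 'a) \<Rightarrow> nat \<Rightarrow> bool" where
  "is_basis M b n \<longleftrightarrow>
     (\<forall>i<n. b i \<in> mcarrier M)
   \<and> (\<forall>v\<in>mcarrier M. \<exists>!c. (\<forall>i\<ge>n. c i = 0) \<and>
          v = msum M (map (\<lambda>i. msmult M (c i) (b i)) [0..<n]))"

definition has_rank :: "('k::comm_ring_1, 'a) kmod \<Rightarrow> nat \<Rightarrow> bool" where
  "has_rank M n \<longleftrightarrow> (\<exists>b. is_basis M b n)"

definition is_free :: "('k::comm_ring_1, 'a) kmod \<Rightarrow> bool" where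
  "is_free M \<longleftrightarrow> (\<exists>n. has_rank M n)"

text \<open>It suffices (and is
  equivalent) to quantify over modules whose elements are functions nat => k,
  since every f.g. projective module is isomorphic to a submodule of k^n.\<close>
definition fgp_free_ring :: "'k::comm_ring_1 itself \<Rightarrow> bool" where
  "fgp_free_ring _ \<longleftrightarrow>
     (\<forall>M :: ('k, nat \<Rightarrow> 'k) kmod. is_kmodule M \<and> fg_projective M \<longrightarrow> is_free M)"

text \<open>Elements of the n-fold tensor power are represented by formal sums
  (lists) of words of length n, a word [a1,...,an] standing for a1 \<otimes> ... \<otimes> an.
  (Scalars are absorbed into the factors.)  Two formal sums are equal in the
  tensor power iff their difference in the free k-module on words lies in the
  span of the multilinearity relations.\<close>

definition ind :: "'a list \<Rightarrow> 'a list \<Rightarrow> 'k::comm_ring_1" where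
  "ind w z = (if z = w then 1 else 0)"

definition fsum :: "'a list list \<Rightarrow> 'a list \<Rightarrow> 'k::comm_ring_1" where
  "fsum L z = of_nat (count_list L z)"

definition tensor_rel :: "('k::comm_ring_1, 'a) kmod \<Rightarrow> nat \<Rightarrow> ('a list \<Rightarrow> 'k) set" where
  "tensor_rel M n =
     {(\<lambda>z. ind (u @ madd M a b # w) z - ind (u @ a # w) z - ind (u @ b # w) z) | u w a b.
        set u \<subseteq> mcarrier M \<and> set w \<subseteq> mcarrier M \<and> a \<in> mcarrier M \<and> b \<in> mcarrier M
        \<and> length u + length w + 1 = n}
   \<union> {(\<lambda>z. ind (u @ msmult M c a # w) z - c * ind (u @ a # w) z) | u w a c.
        set u \<subseteq> mcarrier M \<and> set w \<subseteq> mcarrier M \<and> a \<in> mcarrier M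
        \<and> length u + length w + 1 = n}"

definition tensor_span :: "('k::comm_ring_1, 'a) kmod \<Rightarrow> nat \<Rightarrow> ('a list \<Rightarrow> 'k) set" where
  "tensor_span M n =
     {f. \<exists>(N::nat) c r. (\<forall>i<N. r i \<in> tensor_rel M n) \<and> f = (\<lambda>z. \<Sum>i<N. c i * r i z)}"

definition tensor_eq :: "('k::comm_ring_1, 'a) kmod \<Rightarrow> nat \<Rightarrow> 'a list list \<Rightarrow> 'a list list \<Rightarrow> bool" where
  "tensor_eq M n L1 L2 \<longleftrightarrow>
     (\<forall>w\<in>set L1 \<union> set L2. length w = n \<and> set w \<subseteq> mcarrier M)
   \<and> (\<lambda>z. fsum L1 z - fsum L2 z :: 'k) \<in> tensor_span M n"

definition tensor2_eq :: "('k::comm_ring_1, 'a) kmod \<Rightarrow> ('a \<times> 'a) list \<Rightarrow> ('a \<times> 'a) list \<Rightarrow> bool" where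
  "tensor2_eq M L1 L2 \<longleftrightarrow>
     tensor_eq M 2 (map (\<lambda>(u, v). [u, v]) L1) (map (\<lambda>(u, v). [u, v]) L2)"

text \<open>delta a is a formal sum representing the element of M \<otimes> M (Sweedler:
  a_(1) \<otimes> a_(2)); eps is the counit.\<close>
definition coalgebra :: "('k::comm_ring_1, 'a) kmod \<Rightarrow> ('a \<Rightarrow> ('a \<times> 'a) list) \<Rightarrow> ('a \<Rightarrow> 'k) \<Rightarrow> bool" where
  "coalgebra M delta eps \<longleftrightarrow>
     (\<forall>a\<in>mcarrier M. set (delta a) \<subseteq> mcarrier M \<times> mcarrier M)
   \<and> (\<forall>a\<in>mcarrier M. \<forall>b\<in>mcarrier M. tensor2_eq M (delta (madd M a b)) (delta a @ delta b))
   \<and> (\<forall>c. \<forall>a\<in>mcarrier M. tensor2_eq M (delta (msmult M c a))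
          (map (\<lambda>(u, v). (msmult M c u, v)) (delta a)))
   \<and> (\<forall>a\<in>mcarrier M. \<forall>b\<in>mcarrier M. eps (madd M a b) = eps a + eps b)
   \<and> (\<forall>c. \<forall>a\<in>mcarrier M. eps (msmult M c a) = c * eps a)
   \<and> (\<forall>a\<in>mcarrier M. tensor_eq M 3
          (concat (map (\<lambda>(u, v). map (\<lambda>(p, q). [p, q, v]) (delta u)) (delta a)))
          (concat (map (\<lambda>(u, v). map (\<lambda>(p, q). [u, p, q]) (delta v)) (delta a))))
   \<and> (\<forall>a\<in>mcarrier M. msum M (map (\<lambda>(u, v). msmult M (eps u) v) (delta a)) = a)
   \<and> (\<forall>a\<in>mcarrier M. msum M (map (\<lambda>(u, v). msmult M (eps v) u) (delta a)) = a)"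

text \<open>Object set X; hom-modules A x y; composition m x y z : A x y \<times> A y z \<rightarrow> A x z
  (bilinear, i.e. a linear map on A x y \<otimes> A y z); unit j x = j_x(1) \<in> A x x;
  each A x y a coalgebra (delta x y, eps x y), with m and j coalgebra morphisms.\<close>
definition semi_hopf_category ::
  "'x set \<Rightarrow> ('x \<Rightarrow> 'x \<Rightarrow> ('k::comm_ring_1, 'a) kmod) \<Rightarrow> ('x \<Rightarrow> 'x \<Rightarrow> 'x \<Rightarrow> 'a \<Rightarrow> 'a \<Rightarrow> 'a)
    \<Rightarrow> ('x \<Rightarrow> 'a) \<Rightarrow> ('x \<Rightarrow> 'x \<Rightarrow> 'a \<Rightarrow> ('a \<times> 'a) list) \<Rightarrow> ('x \<Rightarrow> 'x \<Rightarrow> 'a \<Rightarrow> 'k) \<Rightarrow> bool" where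
  "semi_hopf_category X A m j delta eps \<longleftrightarrow>
     (\<forall>x\<in>X. \<forall>y\<in>X. is_kmodule (A x y) \<and> coalgebra (A x y) (delta x y) (eps x y))
   \<and> (\<forall>x\<in>X. \<forall>y\<in>X. \<forall>z\<in>X.
        (\<forall>a\<in>mcarrier (A x y). \<forall>b\<in>mcarrier (A y z). m x y z a b \<in> mcarrier (A x z))
      \<and> (\<forall>a\<in>mcarrier (A x y). \<forall>a'\<in>mcarrier (A x y). \<forall>b\<in>mcarrier (A y z).
           m x y z (madd (A x y) a a') b = madd (A x z) (m x y z a b) (m x y z a' b))
      \<and> (\<forall>a\<in>mcarrier (A x y). \<forall>b\<in>mcarrier (A y z). \<forall>b'\<in>mcarrier (A y z).
           m x y z a (madd (A y z) b b') = madd (A x z) (m x y z a b) (m x y z a b'))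
      \<and> (\<forall>c. \<forall>a\<in>mcarrier (A x y). \<forall>b\<in>mcarrier (A y z).
           m x y z (msmult (A x y) c a) b = msmult (A x z) c (m x y z a b)
         \<and> m x y z a (msmult (A y z) c b) = msmult (A x z) c (m x y z a b)))
   \<and> (\<forall>x\<in>X. j x \<in> mcarrier (A x x))
   \<and> (\<forall>x\<in>X. \<forall>y\<in>X. \<forall>z\<in>X. \<forall>w\<in>X.
        \<forall>a\<in>mcarrier (A x y). \<forall>b\<in>mcarrier (A y z). \<forall>c\<in>mcarrier (A z w).
          m x z w (m x y z a b) c = m x y w a (m y z w b c))
   \<and> (\<forall>x\<in>X. \<forall>y\<in>X. \<forall>a\<in>mcarrier (A x y). m x x y (j x) a = a \<and> m x y y a (j y) = a)
   \<and> (\<forall>x\<in>X. \<forall>y\<in>X. \<forall>z\<in>X. \<forall>a\<in>mcarrier (A x y). \<forall>b\<in>mcarrier (A y z).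
          tensor2_eq (A x z) (delta x z (m x y z a b))
             (concat (map (\<lambda>(u, v). map (\<lambda>(u', v'). (m x y z u u', m x y z v v')) (delta y z b))
                (delta x y a)))
        \<and> eps x z (m x y z a b) = eps x y a * eps y z b)
   \<and> (\<forall>x\<in>X. tensor2_eq (A x x) (delta x x (j x)) [(j x, j x)] \<and> eps x x (j x) = 1)"

definition right_antipode ::
  "'x set \<Rightarrow> ('x \<Rightarrow> 'x \<Rightarrow> ('k::comm_ring_1, 'a) kmod) \<Rightarrow> ('x \<Rightarrow> 'x \<Rightarrow> 'x \<Rightarrow> 'a \<Rightarrow> 'a \<Rightarrow> 'a)
    \<Rightarrow> ('x \<Rightarrow> 'a) \<Rightarrow> ('x \<Rightarrow> 'x \<Rightarrow> 'a \<Rightarrow> ('a \<times> 'a) list) \<Rightarrow> ('x \<Rightarrow> 'x \<Rightarrow> 'a \<Rightarrow> 'k)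
    \<Rightarrow> ('x \<Rightarrow> 'x \<Rightarrow> 'a \<Rightarrow> 'a) \<Rightarrow> bool" where
  "right_antipode X A m j delta eps s \<longleftrightarrow>
     (\<forall>x\<in>X. \<forall>y\<in>X. klinear (A x y) (A y x) (s x y)
        \<and> (\<forall>a\<in>mcarrier (A x y).
             msum (A x x) (map (\<lambda>(u, v). m x y x u (s x y v)) (delta x y a))
               = msmult (A x x) (eps x y a) (j x)))"

definition left_antipode ::
  "'x set \<Rightarrow> ('x \<Rightarrow> 'x \<Rightarrow> ('k::comm_ring_1, 'a) kmod) \<Rightarrow> ('x \<Rightarrow> 'x \<Rightarrow> 'x \<Rightarrow> 'a \<Rightarrow> 'a \<Rightarrow> 'a)
    \<Rightarrow> ('x \<Rightarrow> 'a) \<Rightarrow> ('x \<Rightarrow> 'x \<Rightarrow> 'a \<Rightarrow> ('a \<times> 'a) list) \<Rightarrow> ('x \<Rightarrow> 'x \<Rightarrow> 'a \<Rightarrow> 'k)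
    \<Rightarrow> ('x \<Rightarrow> 'x \<Rightarrow> 'a \<Rightarrow> 'a) \<Rightarrow> bool" where
  "left_antipode X A m j delta eps s \<longleftrightarrow>
     (\<forall>x\<in>X. \<forall>y\<in>X. klinear (A x y) (A y x) (s x y)
        \<and> (\<forall>a\<in>mcarrier (A x y).
             msum (A y y) (map (\<lambda>(u, v). m y x y (s x y u) v) (delta x y a))
               = msmult (A y y) (eps x y a) (j y)))"

definition is_antipode where
  "is_antipode X A m j delta eps s \<longleftrightarrow>
     right_antipode X A m j delta eps s \<and> left_antipode X A m j delta eps s"

definition hopf_category where
  "hopf_category X A m j delta eps \<longleftrightarrow>
     semi_hopf_category X A m j delta eps \<and> (\<exists>s. is_antipode X A m j delta eps s)"

end

theory Submission
  imports Defs "Jordan_Normal_Form.Determinant"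
begin

text \<open>Fix objects \<open>x, y\<close> with \<open>A\<^sub>x\<^sub>y\<close> and \<open>A\<^sub>y\<^sub>y\<close> free of rank \<open>n\<close>. Consider the linear operators
  \<open>L g = (a \<mapsto> a\<^sub>(\<^sub>1\<^sub>) g(a\<^sub>(\<^sub>2\<^sub>)))\<close> from \<open>Hom(A\<^sub>x\<^sub>y, A\<^sub>y\<^sub>y)\<close> to \<open>End(A\<^sub>x\<^sub>y)\<close> and
  \<open>R h = (a \<mapsto> s(a\<^sub>(\<^sub>1\<^sub>)) h(a\<^sub>(\<^sub>2\<^sub>)))\<close> back. Coassociativity, the right antipode identity and the
  counit law give \<open>L (R h) = h\<close>. Both Hom-modules are free of rank \<open>n\<^sup>2\<close>, so in coordinates \<open>L\<close>
  and \<open>R\<close> are square matrices over a commutative ring with \<open>L R = 1\<close>; the adjugate then gives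
  \<open>R L = 1\<close>. As \<open>L (\<epsilon>(-) j\<^sub>y) = id\<close> by the counit law, \<open>R id = \<epsilon>(-) j\<^sub>y\<close>, which is the left
  antipode identity. Zero Hom-modules satisfy it trivially.\<close>

context
  fixes M :: "('k::comm_ring_1, 'a) kmod"
  assumes M: "is_kmodule M"
begin

lemma kmod_zero_in: "mzero M \<in> mcarrier M"
  using M unfolding is_kmodule_def by auto

lemma kmod_add_in: "u \<in> mcarrier M \<Longrightarrow> v \<in> mcarrier M \<Longrightarrow> madd M u v \<in> mcarrier M"
  using M unfolding is_kmodule_def by auto

lemma kmod_smult_in: "v \<in> mcarrier M \<Longrightarrow> msmult M c v \<in> mcarrier M"
  using M unfolding is_kmodule_def by auto

lemma kmod_add_assoc:
  "u \<in> mcarrier M \<Longrightarrow> v \<in> mcarrier M \<Longrightarrow> w \<in> mcarrier M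
   \<Longrightarrow> madd M (madd M u v) w = madd M u (madd M v w)"
  using M unfolding is_kmodule_def by auto

lemma kmod_add_commute: "u \<in> mcarrier M \<Longrightarrow> v \<in> mcarrier M \<Longrightarrow> madd M u v = madd M v u"
  using M unfolding is_kmodule_def by auto

lemma kmod_zero_add: "v \<in> mcarrier M \<Longrightarrow> madd M (mzero M) v = v"
  using M unfolding is_kmodule_def by auto

lemma kmod_add_zero: "v \<in> mcarrier M \<Longrightarrow> madd M v (mzero M) = v"
  using kmod_zero_in kmod_add_commute kmod_zero_add by metis

lemma kmod_neg_ex: "v \<in> mcarrier M \<Longrightarrow> \<exists>w\<in>mcarrier M. madd M v w = mzero M"
  using M unfolding is_kmodule_def by blast

lemma kmod_smult_add:
  "u \<in> mcarrier M \<Longrightarrow> v \<in> mcarrier M \<Longrightarrow> msmult M c (madd M u v) = madd M (msmult M c u) (msmult M c v)"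
  using M unfolding is_kmodule_def by auto

lemma kmod_add_smult: "v \<in> mcarrier M \<Longrightarrow> msmult M (c + d) v = madd M (msmult M c v) (msmult M d v)"
  using M unfolding is_kmodule_def by auto

lemma kmod_smult_smult: "v \<in> mcarrier M \<Longrightarrow> msmult M (c * d) v = msmult M c (msmult M d v)"
  using M unfolding is_kmodule_def by auto

lemma kmod_one_smult: "v \<in> mcarrier M \<Longrightarrow> msmult M 1 v = v"
  using M unfolding is_kmodule_def by auto

lemma kmod_add_left_cancel_zero:
  assumes u: "u \<in> mcarrier M" and v: "v \<in> mcarrier M" and uv: "madd M u v = u"
  shows "v = mzero M"
proof -
  obtain w where w: "w \<in> mcarrier M" "madd M u w = mzero M" using kmod_neg_ex[OF u] by blast
  have wu: "madd M w u = mzero M" using w kmod_add_commute[OF w(1) u] by simp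
  have "v = madd M (madd M w u) v" using wu kmod_zero_add[OF v] by simp
  also have "\<dots> = madd M w u" using kmod_add_assoc[OF w(1) u v] uv by simp
  finally show ?thesis using wu by simp
qed

lemma kmod_smult_zero: "msmult M c (mzero M) = mzero M"
  by (metis kmod_zero_in kmod_smult_in kmod_zero_add kmod_smult_add kmod_add_left_cancel_zero)

lemma kmod_zero_smult: "v \<in> mcarrier M \<Longrightarrow> msmult M 0 v = mzero M"
  by (metis add_0 kmod_smult_in kmod_add_smult kmod_add_left_cancel_zero)

end

lemma msum_Nil [simp]: "msum M [] = mzero M"
  by (simp add: msum_def)

lemma msum_Cons [simp]: "msum M (v # vs) = madd M v (msum M vs)"
  by (simp add: msum_def)

context
  fixes M :: "('k::comm_ring_1, 'a) kmod"
  assumes M: "is_kmodule M"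
begin

lemma msum_in: "set vs \<subseteq> mcarrier M \<Longrightarrow> msum M vs \<in> mcarrier M"
  by (induction vs) (auto intro: kmod_zero_in[OF M] kmod_add_in[OF M])

lemma msum_append:
  assumes "set xs \<subseteq> mcarrier M" "set ys \<subseteq> mcarrier M"
  shows "msum M (xs @ ys) = madd M (msum M xs) (msum M ys)"
  using assms(1)
  by (induction xs) (simp_all add: kmod_zero_add[OF M] kmod_add_assoc[OF M] msum_in assms(2))

lemma msum_map_add:
  assumes "\<forall>x\<in>set xs. f x \<in> mcarrier M \<and> g x \<in> mcarrier M"
  shows "msum M (map (\<lambda>x. madd M (f x) (g x)) xs) = madd M (msum M (map f xs)) (msum M (map g xs))"
  using assms
proof (induction xs)
  case Nil
  then show ?case using kmod_zero_in[OF M] kmod_zero_add[OF M] by simp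
next
  case (Cons a xs)
  let ?F = "msum M (map f xs)" and ?G = "msum M (map g xs)"
  have F: "?F \<in> mcarrier M" and G: "?G \<in> mcarrier M"
    using Cons.prems by (auto intro!: msum_in)
  have fa: "f a \<in> mcarrier M" and ga: "g a \<in> mcarrier M"
    using Cons.prems by auto
  note add_laws = kmod_add_in[OF M] kmod_add_assoc[OF M] kmod_add_commute[OF M]
  have "madd M (madd M (f a) (g a)) (madd M ?F ?G) = madd M (madd M (f a) ?F) (madd M (g a) ?G)"
    using fa ga F G add_laws by metis
  then show ?case using Cons by simp
qed

lemma msum_smult:
  assumes "\<forall>x\<in>set xs. f x \<in> mcarrier M"
  shows "msum M (map (\<lambda>x. msmult M c (f x)) xs) = msmult M c (msum M (map f xs))"
  using assms
  by (induction xs) (simp_all add: kmod_smult_zero[OF M] kmod_smult_add[OF M] msum_in image_subset_iff)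

lemma msum_zeros:
  assumes "\<forall>x\<in>set xs. f x = mzero M"
  shows "msum M (map f xs) = mzero M"
  using assms by (induction xs) (auto simp: kmod_zero_in[OF M] kmod_zero_add[OF M])

lemma msum_single:
  assumes "distinct xs" "p \<in> set xs" "f p \<in> mcarrier M"
  shows "msum M (map (\<lambda>i. if i = p then f i else mzero M) xs) = f p"
  using assms(1,2)
proof (induction xs)
  case (Cons a xs)
  show ?case
  proof (cases "a = p")
    case True
    with Cons.prems have "msum M (map (\<lambda>i. if i = p then f i else mzero M) xs) = mzero M"
      by (intro msum_zeros) auto
    then show ?thesis using True kmod_add_zero[OF M assms(3)] by simp
  next
    case False
    then show ?thesis using Cons kmod_zero_add[OF M] assms(3) by simp
  qed
qed simp

lemma msum_concat_pairs:
  assumes "\<forall>(u, v)\<in>set L. \<forall>(p, q)\<in>set (D u v). \<Phi> (W u v p q) \<in> mcarrier M"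
  shows "msum M (map \<Phi> (concat (map (\<lambda>(u, v). map (\<lambda>(p, q). W u v p q) (D u v)) L)))
       = msum M (map (\<lambda>(u, v). msum M (map (\<lambda>(p, q). \<Phi> (W u v p q)) (D u v))) L)"
  using assms
proof (induction L)
  case (Cons uv L)
  obtain u v where uv: "uv = (u, v)" by (cases uv)
  have "set (map \<Phi> (map (\<lambda>(p, q). W u v p q) (D u v))) \<subseteq> mcarrier M"
    and "set (map \<Phi> (concat (map (\<lambda>(u, v). map (\<lambda>(p, q). W u v p q) (D u v)) L))) \<subseteq> mcarrier M"
    using Cons.prems uv by auto
  then show ?case
    using Cons by (simp add: uv msum_append case_prod_unfold comp_def)
qed simp

end

lemma klinear_in: "klinear M N f \<Longrightarrow> v \<in> mcarrier M \<Longrightarrow> f v \<in> mcarrier N"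
  unfolding klinear_def by blast

lemma klinear_add:
  "klinear M N f \<Longrightarrow> u \<in> mcarrier M \<Longrightarrow> v \<in> mcarrier M \<Longrightarrow> f (madd M u v) = madd N (f u) (f v)"
  unfolding klinear_def by blast

lemma klinear_smult: "klinear M N f \<Longrightarrow> v \<in> mcarrier M \<Longrightarrow> f (msmult M c v) = msmult N c (f v)"
  unfolding klinear_def by blast

lemma klinear_id: "klinear M M (\<lambda>v. v)"
  unfolding klinear_def by simp

lemma klinear_comp: "klinear M N f \<Longrightarrow> klinear N P g \<Longrightarrow> klinear M P (\<lambda>v. g (f v))"
  unfolding klinear_def by simp

lemma klinear_zero:
  assumes M: "is_kmodule M" and N: "is_kmodule N" and f: "klinear M N f"
  shows "f (mzero M) = mzero N"
proof -
  have z: "mzero M \<in> mcarrier M" by (rule kmod_zero_in[OF M])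
  have "madd N (f (mzero M)) (f (mzero M)) = f (mzero M)"
    using klinear_add[OF f z z] kmod_zero_add[OF M z] by simp
  thus ?thesis using kmod_add_left_cancel_zero[OF N] klinear_in[OF f z] by blast
qed

lemma klinear_msum_map:
  assumes M: "is_kmodule M" and N: "is_kmodule N" and f: "klinear M N f"
    and "\<forall>x\<in>set xs. g x \<in> mcarrier M"
  shows "f (msum M (map g xs)) = msum N (map (\<lambda>x. f (g x)) xs)"
  using assms(4)
  by (induction xs) (simp_all add: klinear_zero[OF M N f] klinear_add[OF f] msum_in[OF M] image_subset_iff)

definition klinear_form :: "('k::comm_ring_1, 'a) kmod \<Rightarrow> ('a \<Rightarrow> 'k) \<Rightarrow> bool" where
  "klinear_form M \<phi> \<longleftrightarrow>
     (\<forall>u\<in>mcarrier M. \<forall>v\<in>mcarrier M. \<phi> (madd M u v) = \<phi> u + \<phi> v)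
   \<and> (\<forall>c. \<forall>v\<in>mcarrier M. \<phi> (msmult M c v) = c * \<phi> v)"

lemma klinear_form_zero:
  assumes M: "is_kmodule M" and f: "klinear_form M \<phi>"
  shows "\<phi> (mzero M) = 0"
proof -
  have z: "mzero M \<in> mcarrier M" by (rule kmod_zero_in[OF M])
  have "\<phi> (madd M (mzero M) (mzero M)) = \<phi> (mzero M) + \<phi> (mzero M)"
    using f z unfolding klinear_form_def by blast
  thus ?thesis using kmod_zero_add[OF M z] by simp
qed

lemma klinear_form_msum:
  assumes M: "is_kmodule M" and f: "klinear_form M \<phi>" and "set vs \<subseteq> mcarrier M"
  shows "\<phi> (msum M vs) = sum_list (map \<phi> vs)"
  using assms(3) f
  by (induction vs) (simp_all add: klinear_form_zero[OF M f] klinear_form_def msum_in[OF M])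

lemma klinear_form_comp: "klinear M N f \<Longrightarrow> klinear_form N \<phi> \<Longrightarrow> klinear_form M (\<lambda>v. \<phi> (f v))"
  unfolding klinear_def klinear_form_def by simp

definition lincomb :: "('k::comm_ring_1, 'a) kmod \<Rightarrow> (nat \<Rightarrow> 'a) \<Rightarrow> nat \<Rightarrow> (nat \<Rightarrow> 'k) \<Rightarrow> 'a" where
  "lincomb M b n c = msum M (map (\<lambda>i. msmult M (c i) (b i)) [0..<n])"

definition coord :: "('k::comm_ring_1, 'a) kmod \<Rightarrow> (nat \<Rightarrow> 'a) \<Rightarrow> nat \<Rightarrow> 'a \<Rightarrow> nat \<Rightarrow> 'k" where
  "coord M b n v = (THE c. (\<forall>i\<ge>n. c i = 0) \<and> v = lincomb M b n c)"

lemma lincomb_cong: "(\<And>i. i < n \<Longrightarrow> c i = d i) \<Longrightarrow> lincomb M b n c = lincomb M b n d"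
  unfolding lincomb_def by (intro arg_cong[where f="msum M"]) auto

context
  fixes M :: "('k::comm_ring_1, 'a) kmod" and b n
  assumes M: "is_kmodule M" and B: "is_basis M b n"
begin

lemma basis_in: "i < n \<Longrightarrow> b i \<in> mcarrier M"
  using B unfolding is_basis_def by blast

lemma lincomb_in: "lincomb M b n c \<in> mcarrier M"
  unfolding lincomb_def by (rule msum_in[OF M]) (auto intro!: kmod_smult_in[OF M] basis_in)

lemma coord_unique: "v \<in> mcarrier M \<Longrightarrow> \<exists>!c. (\<forall>i\<ge>n. c i = 0) \<and> v = lincomb M b n c"
  using B unfolding is_basis_def lincomb_def by blast

lemma lincomb_coord: "v \<in> mcarrier M \<Longrightarrow> lincomb M b n (coord M b n v) = v"
  unfolding coord_def by (drule theI'[OF coord_unique]) simp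

lemma coord_eq_0: "v \<in> mcarrier M \<Longrightarrow> n \<le> i \<Longrightarrow> coord M b n v i = 0"
  unfolding coord_def by (drule theI'[OF coord_unique]) simp

lemma coord_lincomb_eq: "\<forall>i\<ge>n. c i = 0 \<Longrightarrow> coord M b n (lincomb M b n c) = c"
  unfolding coord_def by (rule the1_equality[OF coord_unique[OF lincomb_in]]) simp

lemma coord_lincomb: "i < n \<Longrightarrow> coord M b n (lincomb M b n c) i = c i"
  using coord_lincomb_eq[of "\<lambda>i. if i < n then c i else 0"]
  by (simp add: lincomb_cong[of n c "\<lambda>i. if i < n then c i else 0"])

lemma basis_coord_eqI:
  assumes v: "v \<in> mcarrier M" and w: "w \<in> mcarrier M"
    and coords: "\<And>i. i < n \<Longrightarrow> coord M b n v i = coord M b n w i"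
  shows "v = w"
proof -
  have "coord M b n v = coord M b n w"
  proof
    fix i show "coord M b n v i = coord M b n w i"
      using coords coord_eq_0[OF v] coord_eq_0[OF w] by (cases "i < n") auto
  qed
  then show ?thesis using lincomb_coord[OF v] lincomb_coord[OF w] by metis
qed

lemma coord_lincomb_eqI:
  assumes "lincomb M b n c = v" and "\<forall>i\<ge>n. c i = 0"
  shows "coord M b n v = c"
  using assms coord_lincomb_eq by blast

lemma coord_add:
  assumes u: "u \<in> mcarrier M" and v: "v \<in> mcarrier M"
  shows "coord M b n (madd M u v) i = coord M b n u i + coord M b n v i"
proof -
  let ?cu = "coord M b n u" and ?cv = "coord M b n v"
  have "lincomb M b n (\<lambda>i. ?cu i + ?cv i)
      = msum M (map (\<lambda>i. madd M (msmult M (?cu i) (b i)) (msmult M (?cv i) (b i))) [0..<n])"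
    unfolding lincomb_def by (auto intro!: arg_cong[where f="msum M"] simp: kmod_add_smult[OF M] basis_in)
  also have "\<dots> = madd M (lincomb M b n ?cu) (lincomb M b n ?cv)"
    unfolding lincomb_def by (rule msum_map_add[OF M]) (auto intro!: kmod_smult_in[OF M] basis_in)
  also have "\<dots> = madd M u v" by (simp only: lincomb_coord[OF u] lincomb_coord[OF v])
  finally have "coord M b n (madd M u v) = (\<lambda>i. ?cu i + ?cv i)"
    by (rule coord_lincomb_eqI) (simp add: coord_eq_0[OF u] coord_eq_0[OF v])
  then show ?thesis by simp
qed

lemma coord_smult:
  assumes v: "v \<in> mcarrier M"
  shows "coord M b n (msmult M c v) i = c * coord M b n v i"
proof -
  let ?cv = "coord M b n v"
  have "lincomb M b n (\<lambda>i. c * ?cv i) = msum M (map (\<lambda>i. msmult M c (msmult M (?cv i) (b i))) [0..<n])"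
    unfolding lincomb_def by (auto intro!: arg_cong[where f="msum M"] simp: kmod_smult_smult[OF M] basis_in)
  also have "\<dots> = msmult M c (lincomb M b n ?cv)"
    unfolding lincomb_def by (rule msum_smult[OF M]) (auto intro!: kmod_smult_in[OF M] basis_in)
  also have "\<dots> = msmult M c v" by (simp only: lincomb_coord[OF v])
  finally have "coord M b n (msmult M c v) = (\<lambda>i. c * ?cv i)"
    by (rule coord_lincomb_eqI) (simp add: coord_eq_0[OF v])
  then show ?thesis by simp
qed

lemma klinear_form_coord: "klinear_form M (\<lambda>v. coord M b n v i)"
  unfolding klinear_form_def by (simp add: coord_add coord_smult)

lemma coord_basis:
  assumes p: "p < n" and i: "i < n"
  shows "coord M b n (b p) i = (if i = p then 1 else 0)"
proof -
  have "lincomb M b n (\<lambda>i. if i = p then 1 else 0) = msum M (map (\<lambda>i. if i = p then b i else mzero M) [0..<n])"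
    unfolding lincomb_def using basis_in kmod_one_smult[OF M] kmod_zero_smult[OF M]
    by (intro arg_cong[where f="msum M"]) auto
  also have "\<dots> = b p" using msum_single[OF M, of "[0..<n]" p b] p basis_in[OF p] by simp
  finally show ?thesis using coord_lincomb[OF i, of "\<lambda>i. if i = p then 1 else 0"] by simp
qed

lemma klinear_form_basis_expansion:
  assumes f: "klinear_form M \<phi>" and v: "v \<in> mcarrier M"
  shows "\<phi> v = (\<Sum>i<n. coord M b n v i * \<phi> (b i))"
proof -
  have "\<phi> v = \<phi> (lincomb M b n (coord M b n v))" by (simp only: lincomb_coord[OF v])
  also have "\<dots> = sum_list (map (\<lambda>i. \<phi> (msmult M (coord M b n v i) (b i))) [0..<n])"
    unfolding lincomb_def
    by (subst klinear_form_msum[OF M f]) (auto intro!: kmod_smult_in[OF M] basis_in simp: comp_def)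
  also have "\<dots> = (\<Sum>i<n. coord M b n v i * \<phi> (b i))"
    using f basis_in unfolding klinear_form_def
    by (simp add: sum_list_sum_nth atLeast0LessThan)
  finally show ?thesis .
qed

end

section \<open>Multilinear maps are well defined on tensor powers\<close>

definition multilinear_form :: "('k::comm_ring_1, 'a) kmod \<Rightarrow> nat \<Rightarrow> ('a list \<Rightarrow> 'k) \<Rightarrow> bool" where
  "multilinear_form M d \<phi> \<longleftrightarrow>
    (\<forall>u w a b. set u \<subseteq> mcarrier M \<and> set w \<subseteq> mcarrier M \<and> a \<in> mcarrier M \<and> b \<in> mcarrier M
       \<and> length u + length w + 1 = d \<longrightarrow> \<phi> (u @ madd M a b # w) = \<phi> (u @ a # w) + \<phi> (u @ b # w))
  \<and> (\<forall>u w a c. set u \<subseteq> mcarrier M \<and> set w \<subseteq> mcarrier M \<and> a \<in> mcarrier M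
       \<and> length u + length w + 1 = d \<longrightarrow> \<phi> (u @ msmult M c a # w) = c * \<phi> (u @ a # w))"

definition multilinear_map :: "('k::comm_ring_1, 'a) kmod \<Rightarrow> ('k, 'b) kmod \<Rightarrow> nat \<Rightarrow> ('a list \<Rightarrow> 'b) \<Rightarrow> bool" where
  "multilinear_map M N d \<psi> \<longleftrightarrow>
    (\<forall>w. length w = d \<and> set w \<subseteq> mcarrier M \<longrightarrow> \<psi> w \<in> mcarrier N)
  \<and> (\<forall>u w a b. set u \<subseteq> mcarrier M \<and> set w \<subseteq> mcarrier M \<and> a \<in> mcarrier M \<and> b \<in> mcarrier M
       \<and> length u + length w + 1 = d \<longrightarrow> \<psi> (u @ madd M a b # w) = madd N (\<psi> (u @ a # w)) (\<psi> (u @ b # w)))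
  \<and> (\<forall>u w a c. set u \<subseteq> mcarrier M \<and> set w \<subseteq> mcarrier M \<and> a \<in> mcarrier M
       \<and> length u + length w + 1 = d \<longrightarrow> \<psi> (u @ msmult M c a # w) = msmult N c (\<psi> (u @ a # w)))"

lemma sum_ind:
  assumes "finite S" "w \<in> S"
  shows "(\<Sum>z\<in>S. ind w z * f z) = (f w :: 'k::comm_ring_1)"
proof -
  have "(\<Sum>z\<in>S. ind w z * f z) = (\<Sum>z\<in>S. if z = w then f z else 0)"
    by (rule sum.cong) (auto simp: ind_def)
  then show ?thesis using assms by simp
qed

lemma sum_list_eq_sum_fsum:
  assumes "finite S" "set L \<subseteq> S"
  shows "sum_list (map \<phi> L) = (\<Sum>z\<in>S. fsum L z * (\<phi> z :: 'k::comm_ring_1))"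
  using assms(2)
proof (induction L)
  case Nil then show ?case by (simp add: fsum_def)
next
  case (Cons x L)
  have "(\<Sum>z\<in>S. fsum (x # L) z * \<phi> z) = (\<Sum>z\<in>S. ind x z * \<phi> z + fsum L z * \<phi> z)"
    by (rule sum.cong) (auto simp: fsum_def ind_def algebra_simps)
  also have "\<dots> = \<phi> x + (\<Sum>z\<in>S. fsum L z * \<phi> z)"
    using Cons.prems assms(1) by (simp add: sum.distrib sum_ind)
  finally show ?case using Cons by simp
qed

lemma multilinear_form_tensor_rel:
  assumes \<phi>: "multilinear_form M d \<phi>" and r: "r \<in> tensor_rel M d"
  obtains W where "finite W" "\<And>S. finite S \<Longrightarrow> W \<subseteq> S \<Longrightarrow> (\<Sum>z\<in>S. r z * \<phi> z) = 0"
  using r unfolding tensor_rel_def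
proof (elim UnE CollectE exE conjE)
  fix u w a b
  assume r: "r = (\<lambda>z. ind (u @ madd M a b # w) z - ind (u @ a # w) z - ind (u @ b # w) z)"
    and h: "set u \<subseteq> mcarrier M" "set w \<subseteq> mcarrier M" "a \<in> mcarrier M" "b \<in> mcarrier M"
      "length u + length w + 1 = d"
    and thesis: "\<And>W. finite W \<Longrightarrow> (\<And>S. finite S \<Longrightarrow> W \<subseteq> S \<Longrightarrow> (\<Sum>z\<in>S. r z * \<phi> z) = 0) \<Longrightarrow> thesis"
  have "\<phi> (u @ madd M a b # w) = \<phi> (u @ a # w) + \<phi> (u @ b # w)"
    using \<phi> h unfolding multilinear_form_def by blast
  then show thesis
    by (intro thesis[of "{u @ madd M a b # w, u @ a # w, u @ b # w}"])
      (simp_all add: r sum_subtractf left_diff_distrib sum_ind)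
next
  fix u w a c
  assume r: "r = (\<lambda>z. ind (u @ msmult M c a # w) z - c * ind (u @ a # w) z)"
    and h: "set u \<subseteq> mcarrier M" "set w \<subseteq> mcarrier M" "a \<in> mcarrier M"
      "length u + length w + 1 = d"
    and thesis: "\<And>W. finite W \<Longrightarrow> (\<And>S. finite S \<Longrightarrow> W \<subseteq> S \<Longrightarrow> (\<Sum>z\<in>S. r z * \<phi> z) = 0) \<Longrightarrow> thesis"
  have "\<phi> (u @ msmult M c a # w) = c * \<phi> (u @ a # w)"
    using \<phi> h unfolding multilinear_form_def by blast
  then show thesis
    by (intro thesis[of "{u @ msmult M c a # w, u @ a # w}"])
      (simp_all add: r sum_subtractf left_diff_distrib mult.assoc sum_distrib_left[symmetric] sum_ind)
qed

lemma multilinear_form_tensor_eq: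
  assumes \<phi>: "multilinear_form M d \<phi>" and te: "tensor_eq M d L1 L2"
  shows "sum_list (map \<phi> L1) = sum_list (map \<phi> L2)"
proof -
  obtain N :: nat and c r where rel: "\<forall>i<N. r i \<in> tensor_rel M d"
    and diff: "(\<lambda>z. fsum L1 z - fsum L2 z) = (\<lambda>z. \<Sum>i<N. c i * r i z)"
    using te unfolding tensor_eq_def tensor_span_def by blast
  have "\<forall>i\<in>{..<N}. \<exists>W. finite W \<and> (\<forall>S. finite S \<longrightarrow> W \<subseteq> S \<longrightarrow> (\<Sum>z\<in>S. r i z * \<phi> z) = 0)"
    using rel multilinear_form_tensor_rel[OF \<phi>] by (metis lessThan_iff)
  then obtain W where W: "\<forall>i\<in>{..<N}. finite (W i) \<and>
      (\<forall>S. finite S \<longrightarrow> W i \<subseteq> S \<longrightarrow> (\<Sum>z\<in>S. r i z * \<phi> z) = 0)"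
    by (rule bchoice[elim_format]) blast
  define S where "S = set L1 \<union> set L2 \<union> (\<Union>i<N. W i)"
  have S: "finite S" "set L1 \<subseteq> S" "set L2 \<subseteq> S" using W by (auto simp: S_def)
  have "sum_list (map \<phi> L1) - sum_list (map \<phi> L2) = (\<Sum>z\<in>S. (fsum L1 z - fsum L2 z) * \<phi> z)"
    using sum_list_eq_sum_fsum[OF S(1,2), of \<phi>] sum_list_eq_sum_fsum[OF S(1,3), of \<phi>]
    by (simp add: sum_subtractf left_diff_distrib)
  also have "\<dots> = (\<Sum>i<N. c i * (\<Sum>z\<in>S. r i z * \<phi> z))"
    unfolding fun_cong[OF diff] sum_distrib_right sum_distrib_left mult.assoc by (rule sum.swap)
  also have "\<dots> = 0"
  proof (intro sum.neutral ballI)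
    fix i assume i: "i \<in> {..<N}"
    then have "W i \<subseteq> S" by (auto simp: S_def)
    then show "c i * (\<Sum>z\<in>S. r i z * \<phi> z) = 0" using W i S(1) by simp
  qed
  finally show ?thesis by simp
qed

text \<open>Reduced to forms by taking coordinates in a basis of the target.\<close>

lemma multilinear_map_tensor_eq:
  assumes M: "is_kmodule M" and N: "is_kmodule N" and B: "is_basis N e n"
    and \<psi>: "multilinear_map M N d \<psi>" and te: "tensor_eq M d L1 L2"
  shows "msum N (map \<psi> L1) = msum N (map \<psi> L2)"
proof -
  have in_N: "\<psi> w \<in> mcarrier N" if "w \<in> set L1 \<union> set L2" for w
    using \<psi> te that unfolding multilinear_map_def tensor_eq_def by blast
  then have L1: "set (map \<psi> L1) \<subseteq> mcarrier N" and L2: "set (map \<psi> L2) \<subseteq> mcarrier N" by auto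
  show ?thesis
  proof (rule basis_coord_eqI[OF N B msum_in[OF N L1] msum_in[OF N L2]])
    fix q
    let ?\<phi> = "\<lambda>w. coord N e n (\<psi> w) q"
    have "multilinear_form M d ?\<phi>"
      using \<psi> unfolding multilinear_form_def multilinear_map_def
      by (auto simp: coord_add[OF N B] coord_smult[OF N B])
    then have "sum_list (map ?\<phi> L1) = sum_list (map ?\<phi> L2)"
      by (rule multilinear_form_tensor_eq[OF _ te])
    then show "coord N e n (msum N (map \<psi> L1)) q = coord N e n (msum N (map \<psi> L2)) q"
      using klinear_form_msum[OF N klinear_form_coord[OF N B] L1]
        klinear_form_msum[OF N klinear_form_coord[OF N B] L2]
      by (simp add: comp_def)
  qed
qed

definition bilinear :: "('k::comm_ring_1, 'a) kmod \<Rightarrow> ('k, 'b) kmod \<Rightarrow> ('a \<Rightarrow> 'a \<Rightarrow> 'b) \<Rightarrow> bool" where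
  "bilinear M N F \<longleftrightarrow>
     (\<forall>v\<in>mcarrier M. klinear M N (\<lambda>u. F u v)) \<and> (\<forall>u\<in>mcarrier M. klinear M N (F u))"

definition trilinear :: "('k::comm_ring_1, 'a) kmod \<Rightarrow> ('k, 'b) kmod \<Rightarrow> ('a \<Rightarrow> 'a \<Rightarrow> 'a \<Rightarrow> 'b) \<Rightarrow> bool" where
  "trilinear M N F \<longleftrightarrow>
     (\<forall>v\<in>mcarrier M. \<forall>w\<in>mcarrier M. klinear M N (\<lambda>u. F u v w))
   \<and> (\<forall>u\<in>mcarrier M. \<forall>w\<in>mcarrier M. klinear M N (\<lambda>v. F u v w))
   \<and> (\<forall>u\<in>mcarrier M. \<forall>v\<in>mcarrier M. klinear M N (F u v))"

lemma bilinear_multilinear_map: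
  assumes "bilinear M N F"
  shows "multilinear_map M N 2 (\<lambda>w. F (w!0) (w!1))"
  unfolding multilinear_map_def
proof (intro conjI allI impI, goal_cases)
  case (1 w)
  then obtain a0 a1 where "w = [a0, a1]" by (auto simp: length_Suc_conv numeral_2_eq_2)
  then show ?case using 1 assms klinear_in unfolding bilinear_def by fastforce
next
  case (2 u w a b)
  then consider w0 where "u = []" "w = [w0]" | u0 where "u = [u0]" "w = []"
    by (cases u; cases w) auto
  then show ?case using 2 assms unfolding bilinear_def klinear_def by cases auto
next
  case (3 u w a c)
  then consider w0 where "u = []" "w = [w0]" | u0 where "u = [u0]" "w = []"
    by (cases u; cases w) auto
  then show ?case using 3 assms unfolding bilinear_def klinear_def by cases auto
qed

lemma trilinear_multilinear_map:
  assumes "trilinear M N F"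
  shows "multilinear_map M N 3 (\<lambda>w. F (w!0) (w!1) (w!2))"
  unfolding multilinear_map_def
proof (intro conjI allI impI, goal_cases)
  case (1 w)
  then obtain a0 a1 a2 where "w = [a0, a1, a2]" by (auto simp: length_Suc_conv numeral_3_eq_3)
  then show ?case using 1 assms klinear_in unfolding trilinear_def by fastforce
next
  case (2 u w a b)
  then consider w0 w1 where "u = []" "w = [w0, w1]" | u0 w0 where "u = [u0]" "w = [w0]"
    | u0 u1 where "u = [u0, u1]" "w = []"
    by (cases u rule: remdups_adj.cases; cases w rule: remdups_adj.cases) auto
  then show ?case using 2 assms unfolding trilinear_def klinear_def by cases auto
next
  case (3 u w a c)
  then consider w0 w1 where "u = []" "w = [w0, w1]" | u0 w0 where "u = [u0]" "w = [w0]"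
    | u0 u1 where "u = [u0, u1]" "w = []"
    by (cases u rule: remdups_adj.cases; cases w rule: remdups_adj.cases) auto
  then show ?case using 3 assms unfolding trilinear_def klinear_def by cases auto
qed

context
  fixes M :: "('k::comm_ring_1, 'a) kmod" and delta eps
  assumes C: "coalgebra M delta eps"
begin

lemma coalgebra_delta_in:
  assumes "a \<in> mcarrier M" "(u, v) \<in> set (delta a)"
  shows "u \<in> mcarrier M \<and> v \<in> mcarrier M"
proof -
  have "\<forall>a\<in>mcarrier M. set (delta a) \<subseteq> mcarrier M \<times> mcarrier M"
    using C unfolding coalgebra_def by (elim conjE) assumption
  then show ?thesis using assms by blast
qed

lemma coalgebra_delta_add:
  assumes "a \<in> mcarrier M" "b \<in> mcarrier M"
  shows "tensor2_eq M (delta (madd M a b)) (delta a @ delta b)"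
proof -
  have "\<forall>a\<in>mcarrier M. \<forall>b\<in>mcarrier M. tensor2_eq M (delta (madd M a b)) (delta a @ delta b)"
    using C unfolding coalgebra_def by (elim conjE) assumption
  then show ?thesis using assms by blast
qed

lemma coalgebra_delta_smult:
  assumes "a \<in> mcarrier M"
  shows "tensor2_eq M (delta (msmult M c a)) (map (\<lambda>(u, v). (msmult M c u, v)) (delta a))"
proof -
  have "\<forall>c. \<forall>a\<in>mcarrier M. tensor2_eq M (delta (msmult M c a)) (map (\<lambda>(u, v). (msmult M c u, v)) (delta a))"
    using C unfolding coalgebra_def by (elim conjE) assumption
  then show ?thesis using assms by blast
qed

lemma coalgebra_klinear_form_counit: "klinear_form M eps"
proof -
  have "\<forall>a\<in>mcarrier M. \<forall>b\<in>mcarrier M. eps (madd M a b) = eps a + eps b"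
    using C unfolding coalgebra_def by (elim conjE) assumption
  moreover have "\<forall>c. \<forall>a\<in>mcarrier M. eps (msmult M c a) = c * eps a"
    using C unfolding coalgebra_def by (elim conjE) assumption
  ultimately show ?thesis unfolding klinear_form_def by blast
qed

lemma coalgebra_coassoc:
  assumes "a \<in> mcarrier M"
  shows "tensor_eq M 3
     (concat (map (\<lambda>(u, v). map (\<lambda>(p, q). [p, q, v]) (delta u)) (delta a)))
     (concat (map (\<lambda>(u, v). map (\<lambda>(p, q). [u, p, q]) (delta v)) (delta a)))"
proof -
  have "\<forall>a\<in>mcarrier M. tensor_eq M 3
     (concat (map (\<lambda>(u, v). map (\<lambda>(p, q). [p, q, v]) (delta u)) (delta a)))
     (concat (map (\<lambda>(u, v). map (\<lambda>(p, q). [u, p, q]) (delta v)) (delta a)))"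
    using C unfolding coalgebra_def by (elim conjE) assumption
  then show ?thesis using assms by blast
qed

lemma coalgebra_counit_left:
  assumes "a \<in> mcarrier M"
  shows "msum M (map (\<lambda>(u, v). msmult M (eps u) v) (delta a)) = a"
proof -
  have "\<forall>a\<in>mcarrier M. msum M (map (\<lambda>(u, v). msmult M (eps u) v) (delta a)) = a"
    using C unfolding coalgebra_def by (elim conjE) assumption
  then show ?thesis using assms by blast
qed

lemma coalgebra_counit_right:
  assumes "a \<in> mcarrier M"
  shows "msum M (map (\<lambda>(u, v). msmult M (eps v) u) (delta a)) = a"
proof -
  have "\<forall>a\<in>mcarrier M. msum M (map (\<lambda>(u, v). msmult M (eps v) u) (delta a)) = a"
    using C unfolding coalgebra_def by (elim conjE) assumption
  then show ?thesis using assms by blast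
qed

lemma coproduct_terms_in:
  assumes a: "a \<in> mcarrier M" and F: "\<And>u v. u \<in> mcarrier M \<Longrightarrow> v \<in> mcarrier M \<Longrightarrow> F u v \<in> S"
  shows "set (map (\<lambda>(u, v). F u v) (delta a)) \<subseteq> S"
  using coalgebra_delta_in[OF a] F by (auto simp: subset_iff)

context
  fixes N :: "('k, 'b) kmod" and e n
  assumes M: "is_kmodule M" and N: "is_kmodule N" and B: "is_basis N e n"
begin

lemma coproduct_sum_tensor2_eq:
  assumes F: "bilinear M N F" and te: "tensor2_eq M L1 L2"
  shows "msum N (map (\<lambda>(u, v). F u v) L1) = msum N (map (\<lambda>(u, v). F u v) L2)"
proof -
  have pairs: "map (\<lambda>w. F (w!0) (w!1)) (map (\<lambda>(u, v). [u, v]) L) = map (\<lambda>(u, v). F u v) L" for L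
    by (simp add: case_prod_unfold)
  have "msum N (map (\<lambda>w. F (w!0) (w!1)) (map (\<lambda>(u, v). [u, v]) L1))
      = msum N (map (\<lambda>w. F (w!0) (w!1)) (map (\<lambda>(u, v). [u, v]) L2))"
    by (rule multilinear_map_tensor_eq[OF M N B bilinear_multilinear_map[OF F]])
      (use te in \<open>simp add: tensor2_eq_def\<close>)
  then show ?thesis by (simp only: pairs)
qed

lemma klinear_coproduct_sum:
  assumes F: "bilinear M N F"
  shows "klinear M N (\<lambda>a. msum N (map (\<lambda>(u, v). F u v) (delta a)))"
proof -
  have F_in: "F u v \<in> mcarrier N" if "u \<in> mcarrier M" "v \<in> mcarrier M" for u v
    using F that klinear_in unfolding bilinear_def by fast
  have F_smult: "F (msmult M c u) v = msmult N c (F u v)" if "u \<in> mcarrier M" "v \<in> mcarrier M" for c u v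
    using F that klinear_smult unfolding bilinear_def by fast
  show ?thesis
    unfolding klinear_def
  proof (intro conjI ballI allI)
    fix a assume a: "a \<in> mcarrier M"
    show "msum N (map (\<lambda>(u, v). F u v) (delta a)) \<in> mcarrier N"
      by (rule msum_in[OF N coproduct_terms_in[OF a F_in]])
  next
    fix a a' assume a: "a \<in> mcarrier M" and a': "a' \<in> mcarrier M"
    show "msum N (map (\<lambda>(u, v). F u v) (delta (madd M a a')))
        = madd N (msum N (map (\<lambda>(u, v). F u v) (delta a))) (msum N (map (\<lambda>(u, v). F u v) (delta a')))"
      using coproduct_sum_tensor2_eq[OF F coalgebra_delta_add[OF a a']]
        msum_append[OF N coproduct_terms_in[OF a F_in] coproduct_terms_in[OF a' F_in]] by simp
  next
    fix c a assume a: "a \<in> mcarrier M"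
    have "msum N (map (\<lambda>(u, v). F u v) (delta (msmult M c a)))
        = msum N (map (\<lambda>(u, v). F u v) (map (\<lambda>(u, v). (msmult M c u, v)) (delta a)))"
      by (rule coproduct_sum_tensor2_eq[OF F coalgebra_delta_smult[OF a]])
    also have "\<dots> = msum N (map (\<lambda>(u, v). msmult N c (F u v)) (delta a))"
    proof -
      have "F (msmult M c u) v = msmult N c (F u v)" if "(u, v) \<in> set (delta a)" for u v
        using F_smult coalgebra_delta_in[OF a that] by blast
      then show ?thesis by (auto intro!: arg_cong[where f="msum N"])
    qed
    also have "\<dots> = msmult N c (msum N (map (\<lambda>(u, v). F u v) (delta a)))"
      using msum_smult[OF N, of "delta a" "\<lambda>(u, v). F u v" c] coproduct_terms_in[OF a F_in]
      by (simp add: case_prod_unfold subset_iff)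
    finally show "msum N (map (\<lambda>(u, v). F u v) (delta (msmult M c a)))
        = msmult N c (msum N (map (\<lambda>(u, v). F u v) (delta a)))" .
  qed
qed

lemma coproduct_sum_coassoc:
  assumes F: "trilinear M N F" and a: "a \<in> mcarrier M"
  shows "msum N (map (\<lambda>(u, v). msum N (map (\<lambda>(p, q). F u p q) (delta v))) (delta a))
       = msum N (map (\<lambda>(u, v). msum N (map (\<lambda>(p, q). F p q v) (delta u))) (delta a))"
proof -
  let ?\<Phi> = "\<lambda>t. F (t!0) (t!1) (t!2)"
  have F_in: "F u v w \<in> mcarrier N" if "u \<in> mcarrier M" "v \<in> mcarrier M" "w \<in> mcarrier M" for u v w
    using F that klinear_in unfolding trilinear_def by fast
  have inner_in: "\<forall>(u, v)\<in>set (delta a). \<forall>(p, q)\<in>set (delta v). ?\<Phi> [u, p, q] \<in> mcarrier N"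
  proof (intro ballI, clarify)
    fix u v p q assume uv: "(u, v) \<in> set (delta a)" and pq: "(p, q) \<in> set (delta v)"
    have "u \<in> mcarrier M" "v \<in> mcarrier M" using coalgebra_delta_in[OF a uv] by auto
    moreover have "p \<in> mcarrier M" "q \<in> mcarrier M" using coalgebra_delta_in[OF calculation(2) pq] by auto
    ultimately show "?\<Phi> [u, p, q] \<in> mcarrier N" using F_in by simp
  qed
  have outer_in: "\<forall>(u, v)\<in>set (delta a). \<forall>(p, q)\<in>set (delta u). ?\<Phi> [p, q, v] \<in> mcarrier N"
  proof (intro ballI, clarify)
    fix u v p q assume uv: "(u, v) \<in> set (delta a)" and pq: "(p, q) \<in> set (delta u)"
    have "u \<in> mcarrier M" "v \<in> mcarrier M" using coalgebra_delta_in[OF a uv] by auto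
    moreover have "p \<in> mcarrier M" "q \<in> mcarrier M" using coalgebra_delta_in[OF calculation(1) pq] by auto
    ultimately show "?\<Phi> [p, q, v] \<in> mcarrier N" using F_in by simp
  qed
  have "msum N (map (\<lambda>(u, v). msum N (map (\<lambda>(p, q). F u p q) (delta v))) (delta a))
      = msum N (map ?\<Phi> (concat (map (\<lambda>(u, v). map (\<lambda>(p, q). [u, p, q]) (delta v)) (delta a))))"
    using msum_concat_pairs[OF N, where D="\<lambda>u v. delta v" and W="\<lambda>u v p q. [u, p, q]", OF inner_in]
    by simp
  also have "\<dots> = msum N (map ?\<Phi> (concat (map (\<lambda>(u, v). map (\<lambda>(p, q). [p, q, v]) (delta u)) (delta a))))"
    by (rule multilinear_map_tensor_eq[OF M N B trilinear_multilinear_map[OF F], symmetric])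
      (rule coalgebra_coassoc[OF a])
  also have "\<dots> = msum N (map (\<lambda>(u, v). msum N (map (\<lambda>(p, q). F p q v) (delta u))) (delta a))"
    using msum_concat_pairs[OF N, where D="\<lambda>u v. delta u" and W="\<lambda>u v p q. [p, q, v]", OF outer_in]
    by simp
  finally show ?thesis .
qed

end

end

context
  fixes X :: "'x set" and A :: "'x \<Rightarrow> 'x \<Rightarrow> ('k::comm_ring_1, 'a) kmod"
    and m :: "'x \<Rightarrow> 'x \<Rightarrow> 'x \<Rightarrow> 'a \<Rightarrow> 'a \<Rightarrow> 'a" and j :: "'x \<Rightarrow> 'a"
    and delta :: "'x \<Rightarrow> 'x \<Rightarrow> 'a \<Rightarrow> ('a \<times> 'a) list" and eps :: "'x \<Rightarrow> 'x \<Rightarrow> 'a \<Rightarrow> 'k"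
  assumes SH: "semi_hopf_category X A m j delta eps"
begin

lemma semi_hopf_kmodule: "x \<in> X \<Longrightarrow> y \<in> X \<Longrightarrow> is_kmodule (A x y)"
  and semi_hopf_coalgebra: "x \<in> X \<Longrightarrow> y \<in> X \<Longrightarrow> coalgebra (A x y) (delta x y) (eps x y)"
proof -
  have "\<forall>x\<in>X. \<forall>y\<in>X. is_kmodule (A x y) \<and> coalgebra (A x y) (delta x y) (eps x y)"
    using SH unfolding semi_hopf_category_def by (elim conjE) assumption
  then show "x \<in> X \<Longrightarrow> y \<in> X \<Longrightarrow> is_kmodule (A x y)"
    and "x \<in> X \<Longrightarrow> y \<in> X \<Longrightarrow> coalgebra (A x y) (delta x y) (eps x y)" by simp_all
qed

lemma semi_hopf_comp_bilinear:
  assumes "x \<in> X" "y \<in> X" "z \<in> X"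
  shows "(\<forall>a\<in>mcarrier (A x y). klinear (A y z) (A x z) (m x y z a))
       \<and> (\<forall>b\<in>mcarrier (A y z). klinear (A x y) (A x z) (\<lambda>a. m x y z a b))"
proof -
  have "\<forall>x\<in>X. \<forall>y\<in>X. \<forall>z\<in>X.
        (\<forall>a\<in>mcarrier (A x y). \<forall>b\<in>mcarrier (A y z). m x y z a b \<in> mcarrier (A x z))
      \<and> (\<forall>a\<in>mcarrier (A x y). \<forall>a'\<in>mcarrier (A x y). \<forall>b\<in>mcarrier (A y z).
           m x y z (madd (A x y) a a') b = madd (A x z) (m x y z a b) (m x y z a' b))
      \<and> (\<forall>a\<in>mcarrier (A x y). \<forall>b\<in>mcarrier (A y z). \<forall>b'\<in>mcarrier (A y z).
           m x y z a (madd (A y z) b b') = madd (A x z) (m x y z a b) (m x y z a b'))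
      \<and> (\<forall>c. \<forall>a\<in>mcarrier (A x y). \<forall>b\<in>mcarrier (A y z).
           m x y z (msmult (A x y) c a) b = msmult (A x z) c (m x y z a b)
         \<and> m x y z a (msmult (A y z) c b) = msmult (A x z) c (m x y z a b))"
    using SH unfolding semi_hopf_category_def by (elim conjE) assumption
  then show ?thesis using assms unfolding klinear_def by simp
qed

lemma semi_hopf_klinear_comp_right:
  "x \<in> X \<Longrightarrow> y \<in> X \<Longrightarrow> z \<in> X \<Longrightarrow> a \<in> mcarrier (A x y) \<Longrightarrow> klinear (A y z) (A x z) (m x y z a)"
  using semi_hopf_comp_bilinear by blast

lemma semi_hopf_klinear_comp_left:
  "x \<in> X \<Longrightarrow> y \<in> X \<Longrightarrow> z \<in> X \<Longrightarrow> b \<in> mcarrier (A y z) \<Longrightarrow> klinear (A x y) (A x z) (\<lambda>a. m x y z a b)"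
  using semi_hopf_comp_bilinear by blast

lemma semi_hopf_comp_in:
  "x \<in> X \<Longrightarrow> y \<in> X \<Longrightarrow> z \<in> X \<Longrightarrow> a \<in> mcarrier (A x y) \<Longrightarrow> b \<in> mcarrier (A y z)
   \<Longrightarrow> m x y z a b \<in> mcarrier (A x z)"
  using semi_hopf_klinear_comp_right klinear_in by metis

lemma semi_hopf_unit_in: "x \<in> X \<Longrightarrow> j x \<in> mcarrier (A x x)"
proof -
  have "\<forall>x\<in>X. j x \<in> mcarrier (A x x)"
    using SH unfolding semi_hopf_category_def by (elim conjE) assumption
  then show "x \<in> X \<Longrightarrow> j x \<in> mcarrier (A x x)" by simp
qed

lemma semi_hopf_assoc:
  "x \<in> X \<Longrightarrow> y \<in> X \<Longrightarrow> z \<in> X \<Longrightarrow> w \<in> X \<Longrightarrow> a \<in> mcarrier (A x y)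
   \<Longrightarrow> b \<in> mcarrier (A y z) \<Longrightarrow> c \<in> mcarrier (A z w)
   \<Longrightarrow> m x z w (m x y z a b) c = m x y w a (m y z w b c)"
proof -
  have "\<forall>x\<in>X. \<forall>y\<in>X. \<forall>z\<in>X. \<forall>w\<in>X.
        \<forall>a\<in>mcarrier (A x y). \<forall>b\<in>mcarrier (A y z). \<forall>c\<in>mcarrier (A z w).
          m x z w (m x y z a b) c = m x y w a (m y z w b c)"
    using SH unfolding semi_hopf_category_def by (elim conjE) assumption
  then show "x \<in> X \<Longrightarrow> y \<in> X \<Longrightarrow> z \<in> X \<Longrightarrow> w \<in> X \<Longrightarrow> a \<in> mcarrier (A x y)
   \<Longrightarrow> b \<in> mcarrier (A y z) \<Longrightarrow> c \<in> mcarrier (A z w)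
   \<Longrightarrow> m x z w (m x y z a b) c = m x y w a (m y z w b c)" by simp
qed

lemma semi_hopf_unit_left: "x \<in> X \<Longrightarrow> y \<in> X \<Longrightarrow> a \<in> mcarrier (A x y) \<Longrightarrow> m x x y (j x) a = a"
  and semi_hopf_unit_right: "x \<in> X \<Longrightarrow> y \<in> X \<Longrightarrow> a \<in> mcarrier (A x y) \<Longrightarrow> m x y y a (j y) = a"
proof -
  have "\<forall>x\<in>X. \<forall>y\<in>X. \<forall>a\<in>mcarrier (A x y). m x x y (j x) a = a \<and> m x y y a (j y) = a"
    using SH unfolding semi_hopf_category_def by (elim conjE) assumption
  then show "x \<in> X \<Longrightarrow> y \<in> X \<Longrightarrow> a \<in> mcarrier (A x y) \<Longrightarrow> m x x y (j x) a = a"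
    and "x \<in> X \<Longrightarrow> y \<in> X \<Longrightarrow> a \<in> mcarrier (A x y) \<Longrightarrow> m x y y a (j y) = a" by simp_all
qed

end

section \<open>The convolution operators \<open>L\<close> and \<open>R\<close>\<close>

definition id_conv ::
  "('x \<Rightarrow> 'x \<Rightarrow> ('k::comm_ring_1, 'a) kmod) \<Rightarrow> ('x \<Rightarrow> 'x \<Rightarrow> 'x \<Rightarrow> 'a \<Rightarrow> 'a \<Rightarrow> 'a)
   \<Rightarrow> ('x \<Rightarrow> 'x \<Rightarrow> 'a \<Rightarrow> ('a \<times> 'a) list) \<Rightarrow> 'x \<Rightarrow> 'x \<Rightarrow> ('a \<Rightarrow> 'a) \<Rightarrow> 'a \<Rightarrow> 'a" where
  "id_conv A m delta x y g a = msum (A x y) (map (\<lambda>(u, v). m x y y u (g v)) (delta x y a))"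

definition antipode_conv ::
  "('x \<Rightarrow> 'x \<Rightarrow> ('k::comm_ring_1, 'a) kmod) \<Rightarrow> ('x \<Rightarrow> 'x \<Rightarrow> 'x \<Rightarrow> 'a \<Rightarrow> 'a \<Rightarrow> 'a)
   \<Rightarrow> ('x \<Rightarrow> 'x \<Rightarrow> 'a \<Rightarrow> ('a \<times> 'a) list) \<Rightarrow> ('x \<Rightarrow> 'x \<Rightarrow> 'a \<Rightarrow> 'a) \<Rightarrow> 'x \<Rightarrow> 'x
   \<Rightarrow> ('a \<Rightarrow> 'a) \<Rightarrow> 'a \<Rightarrow> 'a" where
  "antipode_conv A m delta s x y h a = msum (A y y) (map (\<lambda>(u, v). m y x y (s x y u) (h v)) (delta x y a))"

locale right_antipode_equal_rank =
  fixes X :: "'x set" and A :: "'x \<Rightarrow> 'x \<Rightarrow> ('k::comm_ring_1, 'a) kmod"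
    and m :: "'x \<Rightarrow> 'x \<Rightarrow> 'x \<Rightarrow> 'a \<Rightarrow> 'a \<Rightarrow> 'a" and j :: "'x \<Rightarrow> 'a"
    and delta :: "'x \<Rightarrow> 'x \<Rightarrow> 'a \<Rightarrow> ('a \<times> 'a) list" and eps :: "'x \<Rightarrow> 'x \<Rightarrow> 'a \<Rightarrow> 'k"
    and s :: "'x \<Rightarrow> 'x \<Rightarrow> 'a \<Rightarrow> 'a" and x y :: 'x and b e :: "nat \<Rightarrow> 'a" and n :: nat
  assumes SH: "semi_hopf_category X A m j delta eps"
    and RA: "right_antipode X A m j delta eps s"
    and x: "x \<in> X" and y: "y \<in> X"
    and basis_xy: "is_basis (A x y) b n" and basis_yy: "is_basis (A y y) e n"
begin

abbreviation "L \<equiv> id_conv A m delta x y"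
abbreviation "R \<equiv> antipode_conv A m delta s x y"

lemma kmodule_xy: "is_kmodule (A x y)" by (rule semi_hopf_kmodule[OF SH x y])
lemma kmodule_yy: "is_kmodule (A y y)" by (rule semi_hopf_kmodule[OF SH y y])
lemma kmodule_xx: "is_kmodule (A x x)" by (rule semi_hopf_kmodule[OF SH x x])
lemma coalgebra_xy: "coalgebra (A x y) (delta x y) (eps x y)" by (rule semi_hopf_coalgebra[OF SH x y])

lemma delta_xy_in: "a \<in> mcarrier (A x y) \<Longrightarrow> (u, v) \<in> set (delta x y a) \<Longrightarrow> u \<in> mcarrier (A x y) \<and> v \<in> mcarrier (A x y)"
  by (rule coalgebra_delta_in[OF coalgebra_xy])

lemma antipode_klinear: "klinear (A x y) (A y x) (s x y)"
  and right_antipode_xy: "a \<in> mcarrier (A x y) \<Longrightarrow>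
     msum (A x x) (map (\<lambda>(u, v). m x y x u (s x y v)) (delta x y a)) = msmult (A x x) (eps x y a) (j x)"
  using RA x y unfolding right_antipode_def by blast+

lemma antipode_in: "u \<in> mcarrier (A x y) \<Longrightarrow> s x y u \<in> mcarrier (A y x)"
  by (rule klinear_in[OF antipode_klinear])

lemma id_conv_cong:
  assumes "\<And>v. v \<in> mcarrier (A x y) \<Longrightarrow> g v = g' v" and a: "a \<in> mcarrier (A x y)"
  shows "L g a = L g' a"
  unfolding id_conv_def using assms delta_xy_in[OF a] by (auto intro!: arg_cong[where f="msum (A x y)"])

lemma antipode_conv_cong:
  assumes "\<And>v. v \<in> mcarrier (A x y) \<Longrightarrow> h v = h' v" and a: "a \<in> mcarrier (A x y)"
  shows "R h a = R h' a"
  unfolding antipode_conv_def using assms delta_xy_in[OF a] by (auto intro!: arg_cong[where f="msum (A y y)"])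

lemma klinear_antipode_conv:
  assumes h: "klinear (A x y) (A x y) h"
  shows "klinear (A x y) (A y y) (R h)"
proof -
  have "bilinear (A x y) (A y y) (\<lambda>u v. m y x y (s x y u) (h v))"
    unfolding bilinear_def
    using klinear_comp[OF antipode_klinear semi_hopf_klinear_comp_left[OF SH y x y klinear_in[OF h]]]
      klinear_comp[OF h semi_hopf_klinear_comp_right[OF SH y x y antipode_in]]
    by blast
  then show ?thesis unfolding antipode_conv_def
    by (rule klinear_coproduct_sum[OF coalgebra_xy kmodule_xy kmodule_yy basis_yy])
qed

lemma right_antipode_comp:
  assumes u: "u \<in> mcarrier (A x y)" and t: "t \<in> mcarrier (A x y)"
  shows "msum (A x y) (map (\<lambda>(p, q). m x y y p (m y x y (s x y q) t)) (delta x y u))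
       = msmult (A x y) (eps x y u) t"
proof -
  let ?ps = "\<lambda>(p, q). m x y x p (s x y q)"
  have ps_in: "\<forall>z\<in>set (delta x y u). ?ps z \<in> mcarrier (A x x)"
    using delta_xy_in[OF u] semi_hopf_comp_in[OF SH x y x] antipode_in by fastforce
  have "msum (A x y) (map (\<lambda>(p, q). m x y y p (m y x y (s x y q) t)) (delta x y u))
      = msum (A x y) (map (\<lambda>z. m x x y (?ps z) t) (delta x y u))"
    using delta_xy_in[OF u] semi_hopf_assoc[OF SH x y x y _ antipode_in t]
    by (auto intro!: arg_cong[where f="msum (A x y)"])
  also have "\<dots> = m x x y (msum (A x x) (map ?ps (delta x y u))) t"
    using klinear_msum_map[OF kmodule_xx kmodule_xy semi_hopf_klinear_comp_left[OF SH x x y t] ps_in]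
    by simp
  also have "\<dots> = m x x y (msmult (A x x) (eps x y u) (j x)) t"
    by (simp add: right_antipode_xy[OF u])
  also have "\<dots> = msmult (A x y) (eps x y u) t"
    using klinear_smult[OF semi_hopf_klinear_comp_left[OF SH x x y t] semi_hopf_unit_in[OF SH x]]
      semi_hopf_unit_left[OF SH x y t] by simp
  finally show ?thesis .
qed

lemma id_conv_antipode_conv:
  assumes h: "klinear (A x y) (A x y) h" and a: "a \<in> mcarrier (A x y)"
  shows "L (R h) a = h a"
proof -
  let ?F = "\<lambda>u p q. m x y y u (m y x y (s x y p) (h q))"
  have h_in: "h q \<in> mcarrier (A x y)" if "q \<in> mcarrier (A x y)" for q
    using klinear_in[OF h that] .
  have inner_in: "m y x y (s x y p) (h q) \<in> mcarrier (A y y)"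
    if "p \<in> mcarrier (A x y)" "q \<in> mcarrier (A x y)" for p q
    using semi_hopf_comp_in[OF SH y x y] antipode_in h_in that by blast
  have F: "trilinear (A x y) (A x y) ?F"
    unfolding trilinear_def
    using semi_hopf_klinear_comp_left[OF SH x y y inner_in]
      klinear_comp[OF antipode_klinear klinear_comp[OF semi_hopf_klinear_comp_left[OF SH y x y h_in]
        semi_hopf_klinear_comp_right[OF SH x y y]]]
      klinear_comp[OF h klinear_comp[OF semi_hopf_klinear_comp_right[OF SH y x y antipode_in]
        semi_hopf_klinear_comp_right[OF SH x y y]]]
    by blast
  have "L (R h) a = msum (A x y) (map (\<lambda>(u, v). msum (A x y) (map (\<lambda>(p, q). ?F u p q) (delta x y v)))
      (delta x y a))"
  proof -
    have "m x y y u (R h v) = msum (A x y) (map (\<lambda>(p, q). ?F u p q) (delta x y v))"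
      if uv: "(u, v) \<in> set (delta x y a)" for u v
    proof -
      have u: "u \<in> mcarrier (A x y)" and v: "v \<in> mcarrier (A x y)" using delta_xy_in[OF a uv] by auto
      have "\<forall>z\<in>set (delta x y v). (\<lambda>(p, q). m y x y (s x y p) (h q)) z \<in> mcarrier (A y y)"
        using delta_xy_in[OF v] inner_in by auto
      from klinear_msum_map[OF kmodule_yy kmodule_xy semi_hopf_klinear_comp_right[OF SH x y y u] this]
      show ?thesis by (simp add: antipode_conv_def case_prod_unfold)
    qed
    then show ?thesis unfolding id_conv_def by (auto intro!: arg_cong[where f="msum (A x y)"])
  qed
  also have "\<dots> = msum (A x y) (map (\<lambda>(u, v). msum (A x y) (map (\<lambda>(p, q). ?F p q v) (delta x y u)))
      (delta x y a))"
    by (rule coproduct_sum_coassoc[OF coalgebra_xy kmodule_xy kmodule_xy basis_xy F a])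
  also have "\<dots> = msum (A x y) (map (\<lambda>(u, v). h (msmult (A x y) (eps x y u) v)) (delta x y a))"
    using delta_xy_in[OF a] right_antipode_comp h_in klinear_smult[OF h]
    by (auto intro!: arg_cong[where f="msum (A x y)"])
  also have "\<dots> = h (msum (A x y) (map (\<lambda>(u, v). msmult (A x y) (eps x y u) v) (delta x y a)))"
  proof -
    have "\<forall>z\<in>set (delta x y a). (\<lambda>(u, v). msmult (A x y) (eps x y u) v) z \<in> mcarrier (A x y)"
      using delta_xy_in[OF a] kmod_smult_in[OF kmodule_xy] by auto
    from klinear_msum_map[OF kmodule_xy kmodule_xy h this] show ?thesis
      by (simp add: case_prod_unfold)
  qed
  also have "\<dots> = h a"
    by (simp add: coalgebra_counit_left[OF coalgebra_xy a])
  finally show ?thesis .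
qed

lemma id_conv_counit:
  assumes a: "a \<in> mcarrier (A x y)"
  shows "L (\<lambda>v. msmult (A y y) (eps x y v) (j y)) a = a"
proof -
  have "m x y y u (msmult (A y y) (eps x y v) (j y)) = msmult (A x y) (eps x y v) u"
    if "u \<in> mcarrier (A x y)" for u v
    using klinear_smult[OF semi_hopf_klinear_comp_right[OF SH x y y that] semi_hopf_unit_in[OF SH y]]
      semi_hopf_unit_right[OF SH x y that] by simp
  then have "L (\<lambda>v. msmult (A y y) (eps x y v) (j y)) a
      = msum (A x y) (map (\<lambda>(u, v). msmult (A x y) (eps x y v) u) (delta x y a))"
    unfolding id_conv_def using delta_xy_in[OF a] by (auto intro!: arg_cong[where f="msum (A x y)"])
  then show ?thesis by (simp add: coalgebra_counit_right[OF coalgebra_xy a])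
qed

end

section \<open>One-sided inverses of square matrices over a commutative ring\<close>

lemma smult_smult_mat: "(a::'k::comm_ring_1) \<cdot>\<^sub>m (b \<cdot>\<^sub>m B) = (a * b) \<cdot>\<^sub>m B"
  by (rule eq_matI) (auto simp: mult.assoc)

lemma one_smult_mat: "(1::'k::comm_ring_1) \<cdot>\<^sub>m B = B"
  by (rule eq_matI) auto

text \<open>From \<open>A B = 1\<close>, \<open>det A\<close> is a unit and the adjugate gives \<open>adj A = det A \<cdot> B\<close>.\<close>

lemma mat_right_inverse_imp_left_inverse:
  fixes A B :: "'k::comm_ring_1 mat"
  assumes A: "A \<in> carrier_mat n n" and B: "B \<in> carrier_mat n n" and AB: "A * B = 1\<^sub>m n"
  shows "B * A = 1\<^sub>m n"
proof -
  have det: "det A * det B = 1" using arg_cong[OF AB, of det] det_mult[OF A B] by simp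
  have adj: "adj_mat A \<in> carrier_mat n n" "adj_mat A * A = det A \<cdot>\<^sub>m 1\<^sub>m n" using adj_mat[OF A] by auto
  have "adj_mat A = adj_mat A * (A * B)" using AB adj by simp
  also have "\<dots> = (adj_mat A * A) * B" using assoc_mult_mat[OF adj(1) A B] by simp
  also have "\<dots> = det A \<cdot>\<^sub>m B" using adj B mult_smult_assoc_mat[OF one_carrier_mat B, of "det A"] by simp
  finally have "det B \<cdot>\<^sub>m adj_mat A = B"
    using det by (simp add: smult_smult_mat mult.commute one_smult_mat)
  then have "B * A = (det B \<cdot>\<^sub>m adj_mat A) * A" by simp
  also have "\<dots> = det B \<cdot>\<^sub>m (adj_mat A * A)" using adj A by (simp add: mult_smult_assoc_mat)
  also have "\<dots> = 1\<^sub>m n" using adj det by (simp add: smult_smult_mat mult.commute one_smult_mat)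
  finally show ?thesis .
qed

text \<open>Coefficient vectors are functions \<open>nat \<Rightarrow> 'k\<close> of which only the first \<open>N\<close> entries matter.\<close>

definition std_basis_vec :: "nat \<Rightarrow> nat \<Rightarrow> 'k::comm_ring_1" where
  "std_basis_vec c = (\<lambda>i. if i = c then 1 else 0)"

definition linear_on_coeffs :: "nat \<Rightarrow> ((nat \<Rightarrow> 'k::comm_ring_1) \<Rightarrow> nat \<Rightarrow> 'k) \<Rightarrow> bool" where
  "linear_on_coeffs N F \<longleftrightarrow> (\<forall>V r. F V r = (\<Sum>c<N. V c * F (std_basis_vec c) r))"

lemma sum_std_basis_vec:
  assumes "c < N"
  shows "(\<Sum>i<N. std_basis_vec c i * f i) = f c"
proof -
  have "(\<Sum>i<N. std_basis_vec c i * f i) = (\<Sum>i<N. if i = c then f i else 0)"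
    by (rule sum.cong) (auto simp: std_basis_vec_def)
  then show ?thesis using assms by simp
qed

lemma linear_on_coeffs_comp:
  assumes F: "linear_on_coeffs N F" and G: "linear_on_coeffs N G"
  shows "F (G V) r = (\<Sum>c<N. V c * (\<Sum>k<N. G (std_basis_vec c) k * F (std_basis_vec k) r))"
proof -
  have GV: "G V k = (\<Sum>c<N. V c * G (std_basis_vec c) k)" for k
    using G unfolding linear_on_coeffs_def by blast
  have "F (G V) r = (\<Sum>k<N. G V k * F (std_basis_vec k) r)"
    using F unfolding linear_on_coeffs_def by blast
  also have "\<dots> = (\<Sum>k<N. (\<Sum>c<N. V c * G (std_basis_vec c) k) * F (std_basis_vec k) r)"
    by (simp only: GV)
  also have "\<dots> = (\<Sum>c<N. V c * (\<Sum>k<N. G (std_basis_vec c) k * F (std_basis_vec k) r))"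
    by (simp add: sum_distrib_left sum_distrib_right mult.assoc) (rule sum.swap)
  finally show ?thesis .
qed

lemma linear_on_coeffs_left_inverse:
  fixes F G :: "(nat \<Rightarrow> 'k::comm_ring_1) \<Rightarrow> nat \<Rightarrow> 'k"
  assumes F: "linear_on_coeffs N F" and G: "linear_on_coeffs N G"
    and FG: "\<And>c r. c < N \<Longrightarrow> r < N \<Longrightarrow> F (G (std_basis_vec c)) r = std_basis_vec c r"
    and r: "r < N"
  shows "G (F V) r = V r"
proof -
  define MF where "MF = mat N N (\<lambda>(r, c). F (std_basis_vec c) r)"
  define MG where "MG = mat N N (\<lambda>(r, c). G (std_basis_vec c) r)"
  have MF: "MF \<in> carrier_mat N N" and MG: "MG \<in> carrier_mat N N" by (auto simp: MF_def MG_def)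
  have prod: "(P * Q) $$ (i, c) = (\<Sum>k<N. Q $$ (k, c) * P $$ (i, k))"
    if "P \<in> carrier_mat N N" "Q \<in> carrier_mat N N" "i < N" "c < N" for P Q :: "'k mat" and i c
    using that by (simp add: scalar_prod_def atLeast0LessThan mult.commute)
  have "MF * MG = 1\<^sub>m N"
  proof (rule eq_matI)
    fix i c assume "i < dim_row (1\<^sub>m N :: 'k mat)" "c < dim_col (1\<^sub>m N :: 'k mat)"
    then have i: "i < N" and c: "c < N" by auto
      have "F (G (std_basis_vec c)) i = (\<Sum>k<N. G (std_basis_vec c) k * F (std_basis_vec k) i)"
      using linear_on_coeffs_comp[OF F G, of "std_basis_vec c" i] by (simp add: sum_std_basis_vec[OF c])
    also have "\<dots> = (MF * MG) $$ (i, c)"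
      using prod[OF MF MG i c] i c by (simp add: MF_def MG_def)
    finally have "(MF * MG) $$ (i, c) = F (G (std_basis_vec c)) i" ..
    then show "(MF * MG) $$ (i, c) = 1\<^sub>m N $$ (i, c)" using FG[OF c i] i c by (simp add: std_basis_vec_def)
  qed (auto simp: MF_def MG_def)
  then have GF: "MG * MF = 1\<^sub>m N" by (rule mat_right_inverse_imp_left_inverse[OF MF MG])
  have "G (F V) r = (\<Sum>c<N. V c * (\<Sum>k<N. F (std_basis_vec c) k * G (std_basis_vec k) r))"
    by (rule linear_on_coeffs_comp[OF G F])
  also have "\<dots> = (\<Sum>c<N. V c * (MG * MF) $$ (r, c))"
    using prod[OF MG MF r] r by (intro sum.cong refl) (auto simp: MF_def MG_def intro!: sum.cong)
  also have "\<dots> = (\<Sum>c<N. std_basis_vec r c * V c)"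
    using GF r by (intro sum.cong refl) (simp add: std_basis_vec_def)
  also have "\<dots> = V r" by (rule sum_std_basis_vec[OF r])
  finally show ?thesis .
qed

section \<open>Matrices of linear maps between free modules of rank \<open>n\<close>\<close>

text \<open>A linear map \<open>M \<rightarrow> N\<close> between modules with bases \<open>b\<close>, \<open>e\<close> of length \<open>n\<close> is encoded by the
  vector \<open>V\<close> of length \<open>n * n\<close> with \<open>V (i * n + j)\<close> the \<open>e\<^sub>j\<close>-coordinate of the image of \<open>b\<^sub>i\<close>.\<close>

definition map_of_coeffs ::
  "('k::comm_ring_1, 'a) kmod \<Rightarrow> (nat \<Rightarrow> 'a) \<Rightarrow> ('k, 'b) kmod \<Rightarrow> (nat \<Rightarrow> 'b) \<Rightarrow> nat
   \<Rightarrow> (nat \<Rightarrow> 'k) \<Rightarrow> 'a \<Rightarrow> 'b" where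
  "map_of_coeffs M b N e n V a = lincomb N e n (\<lambda>j. \<Sum>i<n. coord M b n a i * V (i * n + j))"

definition coeffs_of_map ::
  "('k::comm_ring_1, 'b) kmod \<Rightarrow> (nat \<Rightarrow> 'b) \<Rightarrow> (nat \<Rightarrow> 'a) \<Rightarrow> nat \<Rightarrow> ('a \<Rightarrow> 'b) \<Rightarrow> nat \<Rightarrow> 'k" where
  "coeffs_of_map N e b n f r = (if r < n * n then coord N e n (f (b (r div n))) (r mod n) else 0)"

lemma pair_index_less:
  assumes "i < n" "j < (n::nat)"
  shows "i * n + j < n * n"
proof -
  have "i * n + j < Suc i * n" using assms by simp
  also have "\<dots> \<le> n * n" using assms(1) by (intro mult_right_mono) auto
  finally show ?thesis .
qed

lemma pair_index_div_mod_less: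
  assumes "r < n * (n::nat)"
  shows "r div n < n" "r mod n < n"
proof -
  have "0 < n" using assms by (cases n) auto
  then show "r mod n < n" by simp
  show "r div n < n" using assms by (simp add: less_mult_imp_div_less)
qed

lemma sum_lessThan_add: "(\<Sum>c<m + (k::nat). f c) = (\<Sum>c<m. f c) + (\<Sum>j<k. f (m + j))"
  by (induction k) (simp_all add: add.assoc)

lemma sum_lessThan_mult: "(\<Sum>c<(a::nat) * n. f c) = (\<Sum>i<a. \<Sum>j<n. f (i * n + j))"
  by (induction a) (simp_all add: add.commute[of n] sum_lessThan_add)

lemma linear_on_coeffs_of_shape:
  fixes F :: "(nat \<Rightarrow> 'k::comm_ring_1) \<Rightarrow> nat \<Rightarrow> 'k"
  assumes F: "\<And>V r. F V r = (if r < n * n then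
      sum_list (map (\<lambda>z. \<Sum>j<n. (\<Sum>i<n. P r z i * V (i * n + j)) * K r z j) (Z r)) else 0)"
  shows "linear_on_coeffs (n * n) F"
  unfolding linear_on_coeffs_def
proof (intro allI)
  fix V r
  define Q where "Q i j = sum_list (map (\<lambda>z. P r z i * K r z j) (Z r))" for i j
  have coeffs: "F W r = (if r < n * n then \<Sum>c<n * n. W c * Q (c div n) (c mod n) else 0)" for W
  proof -
    have "sum_list (map (\<lambda>z. \<Sum>j<n. (\<Sum>i<n. P r z i * W (i * n + j)) * K r z j) L)
        = (\<Sum>i<n. \<Sum>j<n. W (i * n + j) * sum_list (map (\<lambda>z. P r z i * K r z j) L))" for L
    proof (induction L)
      case (Cons z L)
      have "(\<Sum>j<n. (\<Sum>i<n. P r z i * W (i * n + j)) * K r z j)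
          = (\<Sum>j<n. \<Sum>i<n. W (i * n + j) * (P r z i * K r z j))"
        by (intro sum.cong refl) (simp add: sum_distrib_left sum_distrib_right mult_ac)
      also have "\<dots> = (\<Sum>i<n. \<Sum>j<n. W (i * n + j) * (P r z i * K r z j))"
        by (rule sum.swap)
      finally show ?case using Cons by (simp add: distrib_left sum.distrib)
    qed simp
    also have "(\<Sum>i<n. \<Sum>j<n. W (i * n + j) * Q i j)
        = (\<Sum>i<n. \<Sum>j<n. W (i * n + j) * Q ((i * n + j) div n) ((i * n + j) mod n))" for W
      by (intro sum.cong refl) simp
    ultimately show ?thesis by (simp add: F Q_def sum_lessThan_mult)
  qed
  have "F (std_basis_vec c) r = Q (c div n) (c mod n)" if "r < n * n" "c < n * n" for c
    using that sum_std_basis_vec[of c "n * n" "\<lambda>c. Q (c div n) (c mod n)"]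
    by (simp add: coeffs mult.commute)
  then show "F V r = (\<Sum>c<n * n. V c * F (std_basis_vec c) r)"
    by (simp add: coeffs)
qed

context
  fixes M :: "('k::comm_ring_1, 'a) kmod" and N :: "('k, 'b) kmod" and b e n
  assumes M: "is_kmodule M" and N: "is_kmodule N" and B: "is_basis M b n" and E: "is_basis N e n"
begin

lemma map_of_coeffs_in: "map_of_coeffs M b N e n V a \<in> mcarrier N"
  unfolding map_of_coeffs_def by (rule lincomb_in[OF N E])

lemma coord_map_of_coeffs:
  "q < n \<Longrightarrow> coord N e n (map_of_coeffs M b N e n V a) q = (\<Sum>i<n. coord M b n a i * V (i * n + q))"
  unfolding map_of_coeffs_def by (rule coord_lincomb[OF N E])

lemma klinear_map_of_coeffs: "klinear M N (map_of_coeffs M b N e n V)"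
  unfolding klinear_def
proof (intro conjI ballI allI map_of_coeffs_in)
  fix a a' assume a: "a \<in> mcarrier M" and a': "a' \<in> mcarrier M"
  show "map_of_coeffs M b N e n V (madd M a a')
      = madd N (map_of_coeffs M b N e n V a) (map_of_coeffs M b N e n V a')"
    by (rule basis_coord_eqI[OF N E map_of_coeffs_in kmod_add_in[OF N map_of_coeffs_in map_of_coeffs_in]])
      (simp add: coord_add[OF N E map_of_coeffs_in map_of_coeffs_in] coord_map_of_coeffs
        coord_add[OF M B a a'] distrib_right sum.distrib)
next
  fix c a assume a: "a \<in> mcarrier M"
  show "map_of_coeffs M b N e n V (msmult M c a) = msmult N c (map_of_coeffs M b N e n V a)"
    by (rule basis_coord_eqI[OF N E map_of_coeffs_in kmod_smult_in[OF N map_of_coeffs_in]])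
      (simp add: coord_smult[OF N E map_of_coeffs_in] coord_map_of_coeffs coord_smult[OF M B a]
        sum_distrib_left mult.assoc)
qed

lemma map_of_coeffs_of_map:
  assumes f: "klinear M N f" and a: "a \<in> mcarrier M"
  shows "map_of_coeffs M b N e n (coeffs_of_map N e b n f) a = f a"
proof (rule basis_coord_eqI[OF N E map_of_coeffs_in klinear_in[OF f a]])
  fix q assume q: "q < n"
  have "coord N e n (map_of_coeffs M b N e n (coeffs_of_map N e b n f) a) q
      = (\<Sum>i<n. coord M b n a i * coord N e n (f (b i)) q)"
    unfolding coord_map_of_coeffs[OF q] by (intro sum.cong refl) (simp add: coeffs_of_map_def pair_index_less q)
  also have "\<dots> = coord N e n (f a) q"
    by (rule klinear_form_basis_expansion[OF M B klinear_form_comp[OF f klinear_form_coord[OF N E]] a, symmetric])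
  finally show "coord N e n (map_of_coeffs M b N e n (coeffs_of_map N e b n f) a) q = coord N e n (f a) q" .
qed

end

context right_antipode_equal_rank
begin

lemma coord_coproduct_sum_map_of_coeffs:
  fixes Q :: "('k, 'a) kmod" and P :: "('k, 'a) kmod"
  assumes Q: "is_kmodule Q" and P: "is_kmodule P" and BQ: "is_basis Q f n" and BP: "is_basis P g n"
    and \<Phi>: "\<And>u. u \<in> mcarrier (A x y) \<Longrightarrow> klinear Q P (\<Phi> u)" and a: "a \<in> mcarrier (A x y)"
  shows "coord P g n (msum P (map (\<lambda>(u, v). \<Phi> u (map_of_coeffs (A x y) b Q f n V v)) (delta x y a))) q
       = sum_list (map (\<lambda>z. \<Sum>j<n. (\<Sum>i<n. coord (A x y) b n (snd z) i * V (i * n + j))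
            * coord P g n (\<Phi> (fst z) (f j)) q) (delta x y a))"
proof -
  let ?h = "map_of_coeffs (A x y) b Q f n V"
  have h_in: "?h v \<in> mcarrier Q" for v by (rule map_of_coeffs_in[OF kmodule_xy Q basis_xy BQ])
  have terms_in: "set (map (\<lambda>(u, v). \<Phi> u (?h v)) (delta x y a)) \<subseteq> mcarrier P"
    using delta_xy_in[OF a] klinear_in[OF \<Phi> h_in] by auto
  have "coord P g n (\<Phi> u (?h v)) q
      = (\<Sum>j<n. (\<Sum>i<n. coord (A x y) b n v i * V (i * n + j)) * coord P g n (\<Phi> u (f j)) q)"
    if "u \<in> mcarrier (A x y)" for u v
    using klinear_form_basis_expansion[OF Q BQ klinear_form_comp[OF \<Phi>[OF that] klinear_form_coord[OF P BP]] h_in]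
      coord_map_of_coeffs[OF kmodule_xy Q basis_xy BQ]
    by simp
  then show ?thesis
    using klinear_form_msum[OF P klinear_form_coord[OF P BP] terms_in] delta_xy_in[OF a]
    by (auto intro!: arg_cong[where f=sum_list] simp: case_prod_unfold)
qed

definition L_coeffs :: "(nat \<Rightarrow> 'k) \<Rightarrow> nat \<Rightarrow> 'k" where
  "L_coeffs V = coeffs_of_map (A x y) b b n (L (map_of_coeffs (A x y) b (A y y) e n V))"

definition R_coeffs :: "(nat \<Rightarrow> 'k) \<Rightarrow> nat \<Rightarrow> 'k" where
  "R_coeffs V = coeffs_of_map (A y y) e b n (R (map_of_coeffs (A x y) b (A x y) b n V))"

lemma linear_on_coeffs_L: "linear_on_coeffs (n * n) L_coeffs"
proof (rule linear_on_coeffs_of_shape)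
  fix V r
  show "L_coeffs V r = (if r < n * n then sum_list (map (\<lambda>z. \<Sum>j<n.
      (\<Sum>i<n. coord (A x y) b n (snd z) i * V (i * n + j)) * coord (A x y) b n (m x y y (fst z) (e j)) (r mod n))
      (delta x y (b (r div n)))) else 0)"
  proof (cases "r < n * n")
    case True
    have "b (r div n) \<in> mcarrier (A x y)"
      by (rule basis_in[OF kmodule_xy basis_xy pair_index_div_mod_less(1)[OF True]])
    then show ?thesis
      unfolding L_coeffs_def coeffs_of_map_def id_conv_def
      by (simp only: True if_True)
        (rule coord_coproduct_sum_map_of_coeffs[OF kmodule_yy kmodule_xy basis_yy basis_xy
          semi_hopf_klinear_comp_right[OF SH x y y]])
  qed (simp add: L_coeffs_def coeffs_of_map_def)
qed

lemma linear_on_coeffs_R: "linear_on_coeffs (n * n) R_coeffs"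
proof (rule linear_on_coeffs_of_shape)
  fix V r
  show "R_coeffs V r = (if r < n * n then sum_list (map (\<lambda>z. \<Sum>j<n.
      (\<Sum>i<n. coord (A x y) b n (snd z) i * V (i * n + j)) * coord (A y y) e n (m y x y (s x y (fst z)) (b j)) (r mod n))
      (delta x y (b (r div n)))) else 0)"
  proof (cases "r < n * n")
    case True
    have "b (r div n) \<in> mcarrier (A x y)"
      by (rule basis_in[OF kmodule_xy basis_xy pair_index_div_mod_less(1)[OF True]])
    then show ?thesis
      unfolding R_coeffs_def coeffs_of_map_def antipode_conv_def
      by (simp only: True if_True)
        (rule coord_coproduct_sum_map_of_coeffs[OF kmodule_xy kmodule_yy basis_xy basis_yy
          semi_hopf_klinear_comp_right[OF SH y x y antipode_in]])
  qed (simp add: R_coeffs_def coeffs_of_map_def)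
qed

lemma L_coeffs_R_coeffs:
  assumes r: "r < n * n"
  shows "L_coeffs (R_coeffs V) r = V r"
proof -
  define p where "p = r div n"
  define q where "q = r mod n"
  have p: "p < n" and q: "q < n" and r_eq: "r = p * n + q"
    using pair_index_div_mod_less[OF r] by (simp_all add: p_def q_def)
  let ?h = "map_of_coeffs (A x y) b (A x y) b n V"
  have h: "klinear (A x y) (A x y) ?h" by (rule klinear_map_of_coeffs[OF kmodule_xy kmodule_xy basis_xy basis_xy])
  have bp: "b p \<in> mcarrier (A x y)" by (rule basis_in[OF kmodule_xy basis_xy p])
  have "L_coeffs (R_coeffs V) r = coord (A x y) b n (L (map_of_coeffs (A x y) b (A y y) e n (R_coeffs V)) (b p)) q"
    using r by (simp add: L_coeffs_def coeffs_of_map_def p_def q_def)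
  also have "L (map_of_coeffs (A x y) b (A y y) e n (R_coeffs V)) (b p) = L (R ?h) (b p)"
    by (rule id_conv_cong[OF _ bp])
      (simp add: R_coeffs_def map_of_coeffs_of_map[OF kmodule_xy kmodule_yy basis_xy basis_yy klinear_antipode_conv[OF h]])
  also have "\<dots> = ?h (b p)" by (rule id_conv_antipode_conv[OF h bp])
  also have "coord (A x y) b n (?h (b p)) q = (\<Sum>i<n. coord (A x y) b n (b p) i * V (i * n + q))"
    by (rule coord_map_of_coeffs[OF kmodule_xy kmodule_xy basis_xy basis_xy q])
  also have "\<dots> = (\<Sum>i<n. if i = p then V (i * n + q) else 0)"
    by (intro sum.cong refl) (simp add: coord_basis[OF kmodule_xy basis_xy p])
  also have "\<dots> = V r" using p r_eq by simp
  finally show ?thesis .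
qed

lemma klinear_counit_unit: "klinear (A x y) (A y y) (\<lambda>v. msmult (A y y) (eps x y v) (j y))"
  using coalgebra_klinear_form_counit[OF coalgebra_xy] kmod_smult_in[OF kmodule_yy semi_hopf_unit_in[OF SH y]]
    kmod_add_smult[OF kmodule_yy semi_hopf_unit_in[OF SH y]] kmod_smult_smult[OF kmodule_yy semi_hopf_unit_in[OF SH y]]
  unfolding klinear_def klinear_form_def by simp

lemma left_antipode_xy:
  assumes a: "a \<in> mcarrier (A x y)"
  shows "msum (A y y) (map (\<lambda>(u, v). m y x y (s x y u) v) (delta x y a)) = msmult (A y y) (eps x y a) (j y)"
proof -
  let ?g = "\<lambda>v. msmult (A y y) (eps x y v) (j y)"
  define V where "V = coeffs_of_map (A y y) e b n ?g"
  have L_V: "L_coeffs V = coeffs_of_map (A x y) b b n (\<lambda>v. v)"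
  proof
    fix r
    show "L_coeffs V r = coeffs_of_map (A x y) b b n (\<lambda>v. v) r"
    proof (cases "r < n * n")
      case True
      have br: "b (r div n) \<in> mcarrier (A x y)"
        by (rule basis_in[OF kmodule_xy basis_xy pair_index_div_mod_less(1)[OF True]])
      have "L (map_of_coeffs (A x y) b (A y y) e n V) (b (r div n)) = L ?g (b (r div n))"
        by (rule id_conv_cong[OF _ br])
          (simp add: V_def map_of_coeffs_of_map[OF kmodule_xy kmodule_yy basis_xy basis_yy klinear_counit_unit])
      then show ?thesis using True id_conv_counit[OF br] by (simp add: L_coeffs_def coeffs_of_map_def)
    qed (simp add: L_coeffs_def coeffs_of_map_def)
  qed
  have R_id: "R_coeffs (L_coeffs V) = coeffs_of_map (A y y) e b n (R (\<lambda>v. v))"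
  proof
    fix r
    show "R_coeffs (L_coeffs V) r = coeffs_of_map (A y y) e b n (R (\<lambda>v. v)) r"
    proof (cases "r < n * n")
      case True
      have br: "b (r div n) \<in> mcarrier (A x y)"
        by (rule basis_in[OF kmodule_xy basis_xy pair_index_div_mod_less(1)[OF True]])
      have "R (map_of_coeffs (A x y) b (A x y) b n (L_coeffs V)) (b (r div n)) = R (\<lambda>v. v) (b (r div n))"
        by (rule antipode_conv_cong[OF _ br])
          (simp add: L_V map_of_coeffs_of_map[OF kmodule_xy kmodule_xy basis_xy basis_xy klinear_id])
      then show ?thesis using True by (simp add: R_coeffs_def coeffs_of_map_def)
    qed (simp add: R_coeffs_def coeffs_of_map_def)
  qed
  have coeffs: "coeffs_of_map (A y y) e b n (R (\<lambda>v. v)) = V"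
  proof
    fix r
    show "coeffs_of_map (A y y) e b n (R (\<lambda>v. v)) r = V r"
    proof (cases "r < n * n")
      case True
      have "R_coeffs (L_coeffs V) r = V r"
        by (rule linear_on_coeffs_left_inverse[OF linear_on_coeffs_L linear_on_coeffs_R _ True])
          (rule L_coeffs_R_coeffs)
      then show ?thesis by (simp only: R_id)
    qed (simp add: V_def coeffs_of_map_def)
  qed
  have "R (\<lambda>v. v) a = map_of_coeffs (A x y) b (A y y) e n V a"
    using map_of_coeffs_of_map[OF kmodule_xy kmodule_yy basis_xy basis_yy klinear_antipode_conv[OF klinear_id] a]
    by (simp add: coeffs)
  also have "\<dots> = ?g a"
    unfolding V_def by (rule map_of_coeffs_of_map[OF kmodule_xy kmodule_yy basis_xy basis_yy klinear_counit_unit a])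
  finally show ?thesis by (simp add: antipode_conv_def)
qed

end

lemma left_antipode_identity_zero_hom:
  assumes SH: "semi_hopf_category X A m j delta eps" and RA: "right_antipode X A m j delta eps s"
    and x: "x \<in> X" and y: "y \<in> X" and zero: "mcarrier (A x y) = {mzero (A x y)}"
    and a: "a \<in> mcarrier (A x y)"
  shows "msum (A y y) (map (\<lambda>(u, v). m y x y (s x y u) v) (delta x y a)) = msmult (A y y) (eps x y a) (j y)"
proof -
  have Axy: "is_kmodule (A x y)" and Ayy: "is_kmodule (A y y)"
    using semi_hopf_kmodule[OF SH] x y by auto
  have C: "coalgebra (A x y) (delta x y) (eps x y)" by (rule semi_hopf_coalgebra[OF SH x y])
  have "klinear (A x y) (A y x) (s x y)" using RA x y unfolding right_antipode_def by blast
  then have s_zero: "s x y (mzero (A x y)) \<in> mcarrier (A y x)" by (rule klinear_in[OF _ kmod_zero_in[OF Axy]])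
  have "msum (A y y) (map (\<lambda>(u, v). m y x y (s x y u) v) (delta x y a)) = mzero (A y y)"
  proof (rule msum_zeros[OF Ayy], intro ballI)
    fix z assume z: "z \<in> set (delta x y a)"
    obtain u v where uv: "z = (u, v)" by (cases z)
    then have "u \<in> mcarrier (A x y)" "v \<in> mcarrier (A x y)"
      using coalgebra_delta_in[OF C a] z by auto
    then have "u = mzero (A x y)" "v = mzero (A x y)" using zero by auto
    then show "(\<lambda>(u, v). m y x y (s x y u) v) z = mzero (A y y)"
      using uv klinear_zero[OF Axy Ayy semi_hopf_klinear_comp_right[OF SH y x y s_zero]] by simp
  qed
  also have "\<dots> = msmult (A y y) (eps x y a) (j y)"
    using a zero klinear_form_zero[OF Axy coalgebra_klinear_form_counit[OF C]]
      kmod_zero_smult[OF Ayy semi_hopf_unit_in[OF SH y]] by simp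
  finally show ?thesis .
qed

lemma right_antipode_imp_left_antipode:
  assumes SH: "semi_hopf_category X A m j delta eps" and RA: "right_antipode X A m j delta eps s"
    and rank: "\<forall>x\<in>X. \<forall>y\<in>X. mcarrier (A x y) \<noteq> {mzero (A x y)} \<longrightarrow>
           (\<exists>n. has_rank (A x y) n \<and> has_rank (A y y) n)"
  shows "left_antipode X A m j delta eps s"
  unfolding left_antipode_def
proof (intro ballI conjI)
  fix x y assume x: "x \<in> X" and y: "y \<in> X"
  show "klinear (A x y) (A y x) (s x y)" using RA x y unfolding right_antipode_def by blast
  fix a assume a: "a \<in> mcarrier (A x y)"
  show "msum (A y y) (map (\<lambda>(u, v). m y x y (s x y u) v) (delta x y a)) = msmult (A y y) (eps x y a) (j y)"
  proof (cases "mcarrier (A x y) = {mzero (A x y)}")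
    case True
    then show ?thesis by (rule left_antipode_identity_zero_hom[OF SH RA x y _ a])
  next
    case False
    then obtain n b e where "is_basis (A x y) b n" "is_basis (A y y) e n"
      using rank x y unfolding has_rank_def by blast
    then interpret right_antipode_equal_rank X A m j delta eps s x y b e n
      using SH RA x y by unfold_locales
    show ?thesis by (rule left_antipode_xy[OF a])
  qed
qed

theorem mainTheorem9:
  fixes X :: "'x set"
    and A :: "'x \<Rightarrow> 'x \<Rightarrow> ('k::comm_ring_1, 'a) kmod"
    and m :: "'x \<Rightarrow> 'x \<Rightarrow> 'x \<Rightarrow> 'a \<Rightarrow> 'a \<Rightarrow> 'a"
    and j :: "'x \<Rightarrow> 'a"
    and delta :: "'x \<Rightarrow> 'x \<Rightarrow> 'a \<Rightarrow> ('a \<times> 'a) list"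
    and eps :: "'x \<Rightarrow> 'x \<Rightarrow> 'a \<Rightarrow> 'k"
    and s :: "'x \<Rightarrow> 'x \<Rightarrow> 'a \<Rightarrow> 'a"
  assumes "fgp_free_ring TYPE('k)"
    and "semi_hopf_category X A m j delta eps"
    and "\<forall>x\<in>X. \<forall>y\<in>X. fg_projective (A x y)"
    and "\<forall>x\<in>X. \<forall>y\<in>X. mcarrier (A x y) \<noteq> {mzero (A x y)} \<longrightarrow>
           (\<exists>n. has_rank (A x y) n \<and> has_rank (A y y) n)"
    and "right_antipode X A m j delta eps s"
  shows "left_antipode X A m j delta eps s \<and> is_antipode X A m j delta eps s
         \<and> hopf_category X A m j delta eps"
proof -
  have left: "left_antipode X A m j delta eps s"
    by (rule right_antipode_imp_left_antipode[OF assms(2,5,4)])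
  then have antipode: "is_antipode X A m j delta eps s"
    using assms(5) unfolding is_antipode_def by simp
  then have "hopf_category X A m j delta eps"
    using assms(2) unfolding hopf_category_def by blast
  with left antipode show ?thesis by simp
qed

end
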